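(* Let $u$ be a word and $x,y,z$ letters with $x<y\le z$ such that $uyxz\in W(R)$. Then $\chi_R^3(uyxz)\sim_K\chi_R^3(uyzx)$.
   Context: $\sim_K$ is Knuth equivalence; $w|_B$ is the subword of letters in $B$; for a tableau $T$ (English notation), $\mathrm{word}(T)=\dotsb u^2u^1$ with $u^i$ the $i$-th row read left to right. $R=(R_1,\dots,R_t)$ is a sequence of rectangular partitions, $R_i$ with $\eta_i$ rows and $\mu_i$ columns; $n=\sum\eta_i$; $A_i=\{\eta_1+\dots+\eta_{i-1}+1,\dots,\eta_1+\dots+\eta_i\}$; $Y_i$ is the column-strict tableau of shape $R_i$ whose $j$-th row consists of $\mu_i$ copies of $\eta_1+\dots+\eta_{i-1}+j$. $W(R)$ is the set of words $w$ in $[n]$ with $w|_{A_i}\sim_K\mathrm{word}(Y_i)$ for all $i$. For $1\le r\le n-1$ and a word $v$, regard letters $r$ as right and $r+1$ as left parentheses, match them, leaving an unmatched subword $r^c(r+1)^d$; $s_rv$ replaces it (in the same positions) by $r^d(r+1)^c$. These satisfy the Coxeter relations of $S_n$, giving an action of $S_n$ on words. $w_0^R$ is the longest element of the Young subgroup of $S_n$ stabilizing each $A_i$; for a word $w=vx$ with $x$ a letter, $\chi_R(w)=(w_0^Rx)(w_0^Rv)$. *)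

theory Defs
  imports Main
begin

(* Words are lists of positive naturals (letters). *)

inductive knuth_step :: "nat list \<Rightarrow> nat list \<Rightarrow> bool" where
  K1: "x < y \<Longrightarrow> y \<le> z \<Longrightarrow> knuth_step (u @ [y, x, z] @ v) (u @ [y, z, x] @ v)"
| K2: "x \<le> y \<Longrightarrow> y < z \<Longrightarrow> knuth_step (u @ [x, z, y] @ v) (u @ [z, x, y] @ v)"

definition knuth_equiv :: "nat list \<Rightarrow> nat list \<Rightarrow> bool" (infix "\<sim>\<^sub>K" 50) where
  "knuth_equiv = equivclp knuth_step"

definition restrict_word :: "nat list \<Rightarrow> nat set \<Rightarrow> nat list" where
  "restrict_word w B = filter (\<lambda>a. a \<in> B) w"

(* R is a list of rectangles (eta_i, mu_i): eta_i rows, mu_i columns *)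
definition rect_rows :: "(nat \<times> nat) list \<Rightarrow> nat \<Rightarrow> nat" where
  "rect_rows R i = fst (R ! i)"

definition rect_cols :: "(nat \<times> nat) list \<Rightarrow> nat \<Rightarrow> nat" where
  "rect_cols R i = snd (R ! i)"

(* eta_1 + ... + eta_{i} for 0-based index i  (sum over blocks before block i) *)
definition offset :: "(nat \<times> nat) list \<Rightarrow> nat \<Rightarrow> nat" where
  "offset R i = (\<Sum>j<i. rect_rows R j)"

definition total_n :: "(nat \<times> nat) list \<Rightarrow> nat" where
  "total_n R = (\<Sum>j<length R. rect_rows R j)"

(* A_i (0-based block index i) *)
definition block :: "(nat \<times> nat) list \<Rightarrow> nat \<Rightarrow> nat set" where
  "block R i = {offset R i + 1 .. offset R i + rect_rows R i}"

(* word(Y_i) = u^{eta} ... u^2 u^1, row j consisting of mu_i copies of offset + j *)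
definition wordY :: "(nat \<times> nat) list \<Rightarrow> nat \<Rightarrow> nat list" where
  "wordY R i = concat (map (\<lambda>j. replicate (rect_cols R i) (offset R i + j))
                          (rev [1..<rect_rows R i + 1]))"

definition WR :: "(nat \<times> nat) list \<Rightarrow> nat list set" where
  "WR R = {w. set w \<subseteq> {1..total_n R} \<and>
              (\<forall>i<length R. restrict_word w (block R i) \<sim>\<^sub>K wordY R i)}"

(* Bracketing for s_r: letters r are right parentheses, r+1 left parentheses.
   brk r w i opens rs scans w (current position i), keeping a stack 'opens' of positions of
   as yet unmatched letters r+1 and the list 'rs' of positions of unmatched letters r.
   Result: (positions of unmatched r, positions of unmatched r+1), both increasing. *)
fun brk :: "nat \<Rightarrow> nat list \<Rightarrow> nat \<Rightarrow> nat list \<Rightarrow> nat list \<Rightarrow> nat list \<times> nat list" where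
  "brk r [] i opens rs = (rs, rev opens)"
| "brk r (a # w) i opens rs =
     (if a = r + 1 then brk r w (Suc i) (i # opens) rs
      else if a = r then
        (case opens of [] \<Rightarrow> brk r w (Suc i) [] (rs @ [i])
                     | _ # os \<Rightarrow> brk r w (Suc i) os rs)
      else brk r w (Suc i) opens rs)"

(* s_r v: the unmatched subword r^c (r+1)^d is replaced, in the same positions, by r^d (r+1)^c *)
definition s_op :: "nat \<Rightarrow> nat list \<Rightarrow> nat list" where
  "s_op r v = (let (rs, ls) = brk r v 0 [] [];
                   U = rs @ ls; d = length ls
               in map (\<lambda>p. if p \<in> set U
                            then (if length (filter (\<lambda>q. q < p) U) < d then r else Suc r)
                            else v ! p) [0..<length v])"

(* action of s_{r_1} s_{r_2} ... s_{r_k} (given as the list [r_1,...,r_k]) on a word *)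
definition act :: "nat list \<Rightarrow> nat list \<Rightarrow> nat list" where
  "act rs v = foldr s_op rs v"

(* a reduced word for w_0^R: product over blocks of the longest element of S_{A_i},
   written as (s_{a+1})(s_{a+2} s_{a+1}) ... (s_{a+m-1} ... s_{a+1}), a = offset, m = eta_i *)
definition w0R_word :: "(nat \<times> nat) list \<Rightarrow> nat list" where
  "w0R_word R = concat (map (\<lambda>i. concat (map (\<lambda>k. rev [offset R i + 1 ..< offset R i + k + 1])
                                                  [1..<rect_rows R i]))
                            [0..<length R])"

fun chi :: "(nat \<times> nat) list \<Rightarrow> nat list \<Rightarrow> nat list" where
  "chi R [] = []"
| "chi R w = act (w0R_word R) [last w] @ act (w0R_word R) (butlast w)"

end

theory Submission
  imports Defs
begin

text \<open>For \<open>r\<close> and \<open>r + 1\<close> in one block \<open>A\<^sub>i\<close>, read \<open>r + 1\<close> as an opening and \<open>r\<close> as a closing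
  bracket. Knuth relations preserve whether all closing brackets are matched and how many opening
  ones are not, and \<open>word(Y\<^sub>i)\<close> is balanced; so in a word of \<open>W(R)\<close> every such bracketing is
  balanced. Writing the word as \<open>v a\<close>, this forces \<open>a\<close> to be the first letter of its block and \<open>v\<close> to
  be balanced except for one unmatched letter at the first bracket of the block. If the block is
  \<open>{m..M}\<close>, the factor of \<open>w\<^sub>0\<^sup>R\<close> for it acts on such \<open>v\<close> as the chain \<open>s\<^bsub>M-1\<^esub> \<cdots> s\<^bsub>m\<^esub>\<close>,
  which lowers one letter in each step, at decreasing positions; the other factors act trivially.
  So \<open>\<chi>\<^sub>R(v a) = M \<cdot> (lowered v)\<close>, a word of the same kind. Chains of different blocks commute and
  ignore letters of other blocks.

  For \<open>uyxz\<close> and \<open>uyzx\<close>, \<open>x\<close> and \<open>z\<close> are first letters of blocks \<open>i\<^sub>x < i\<^sub>z\<close>, and two steps give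
  \<open>M\<^sub>x M\<^sub>z D\<close> and \<open>M\<^sub>z M\<^sub>x D\<close> with the same \<open>D\<close>. The third step lowers in the block of \<open>y\<close>. If it
  lies strictly between, the results are \<open>M M\<^sub>x M\<^sub>z E\<close> and \<open>M M\<^sub>z M\<^sub>x E\<close>. If it is the block of \<open>z\<close>
  (of \<open>x\<close>), the positions lowered by the chains of two consecutive applications of \<open>\<chi>\<^sub>R\<close> interlace,
  which shows that the lowered word starts with \<open>M\<^sub>z\<close> (with \<open>M\<^sub>x - 1\<close>); in all cases the results
  differ by one elementary Knuth relation.\<close>

section \<open>Brackets\<close>

text \<open>A word is \<open>matched\<close> at \<open>r\<close> if every closing bracket \<open>r\<close> is matched by an earlier opening
  bracket \<open>r + 1\<close>, and \<open>balanced\<close> if moreover every opening bracket is matched.\<close>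
definition paren :: "nat \<Rightarrow> nat \<Rightarrow> int" where
  "paren r a = (if a = Suc r then 1 else if a = r then -1 else 0)"

definition depth :: "nat \<Rightarrow> nat list \<Rightarrow> int" where
  "depth r v = sum_list (map (paren r) v)"

definition matched_from :: "nat \<Rightarrow> int \<Rightarrow> nat list \<Rightarrow> bool" where
  "matched_from r c w = (\<forall>k\<le>length w. c + depth r (take k w) \<ge> 0)"

definition matched :: "nat \<Rightarrow> nat list \<Rightarrow> bool" where
  "matched r v = (\<forall>j\<le>length v. depth r (take j v) \<ge> 0)"

lemma depth_simps[simp]: "depth r [] = 0" "depth r (a # v) = paren r a + depth r v"
  "depth r (v @ w) = depth r v + depth r w"
  by (auto simp: depth_def)

lemma matched_from_Cons[simp]: "matched_from r c (a # w) \<longleftrightarrow> c \<ge> 0 \<and> matched_from r (c + paren r a) w"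
  unfolding matched_from_def by (simp add: add.assoc flip: less_Suc_eq_le add: All_less_Suc2)

lemma matched_from_Nil[simp]: "matched_from r c [] \<longleftrightarrow> c \<ge> 0" by (simp add: matched_from_def)

lemma matched_from_nonneg: "matched_from r c w \<Longrightarrow> c \<ge> 0"
  by (cases w) auto

lemma matched_from_append: "matched_from r c (u @ w) \<longleftrightarrow> matched_from r c u \<and> matched_from r (c + depth r u) w"
  by (induction u arbitrary: c) (auto simp: add.assoc dest: matched_from_nonneg)

lemma matched_eq_matched_from: "matched r w = matched_from r 0 w"
  by (simp add: matched_def matched_from_def)

lemma matched_depth_nonneg: "matched r v \<Longrightarrow> depth r v \<ge> 0"
  using matched_from_append[of r 0 v "[]"] by (simp add: matched_eq_matched_from)

lemma matched_Cons_neutral: "paren r a = 0 \<Longrightarrow> matched r (a # v) \<longleftrightarrow> matched r v"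
  by (simp add: matched_eq_matched_from)

lemma depth_take_cong: "map (paren r) v = map (paren r) v' \<Longrightarrow> depth r (take i v) = depth r (take i v')"
  unfolding depth_def by (metis take_map)

lemma matched_cong: "map (paren r) v = map (paren r) v' \<Longrightarrow> matched r v \<longleftrightarrow> matched r v'"
  unfolding matched_def using depth_take_cong by (metis length_map)

lemma depth_cong: "map (paren r) v = map (paren r) v' \<Longrightarrow> depth r v = depth r v'"
  by (simp add: depth_def)

abbreviation balanced :: "nat \<Rightarrow> nat list \<Rightarrow> bool" where
  "balanced r v \<equiv> matched r v \<and> depth r v = 0"

lemma matched_snoc: "matched r (v @ [a]) \<longleftrightarrow> matched r v \<and> depth r v + paren r a \<ge> 0"
  using matched_depth_nonneg by (auto simp: matched_eq_matched_from matched_from_append)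

lemma depth_take_Suc: "p < length v \<Longrightarrow> depth r (take (Suc p) v) = depth r (take p v) + paren r (v ! p)"
  by (simp add: take_Suc_conv_app_nth)

lemma balanced_snoc_neutral: "paren r a = 0 \<Longrightarrow> balanced r (v @ [a]) \<longleftrightarrow> balanced r v"
  by (auto simp: matched_snoc dest: matched_depth_nonneg)

lemma depth_list_update:
  "p < length v \<Longrightarrow> depth r (v[p := c]) = depth r v + paren r c - paren r (v ! p)"
  by (induction v arbitrary: p) (auto split: nat.splits)

lemma depth_take_list_update:
  assumes "p < length v"
  shows "depth r (take i (v[p := c])) =
    depth r (take i v) + (if p < i then paren r c - paren r (v ! p) else 0)"
  using assms
  by (cases "p < i") (simp_all add: take_update_swap depth_list_update list_update_beyond)

definition insert_nth :: "nat \<Rightarrow> 'a \<Rightarrow> 'a list \<Rightarrow> 'a list" where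
  "insert_nth k a xs = take k xs @ a # drop k xs"

lemma length_insert_nth[simp]: "k \<le> length xs \<Longrightarrow> length (insert_nth k a xs) = Suc (length xs)"
  by (simp add: insert_nth_def)

lemma nth_insert_nth: "k \<le> length xs \<Longrightarrow> q \<le> length xs \<Longrightarrow>
   insert_nth k a xs ! q = (if q < k then xs ! q else if q = k then a else xs ! (q - 1))"
  by (auto simp: insert_nth_def nth_append min_def)

lemma insert_nth_0: "insert_nth 0 a xs = a # xs"
  by (simp add: insert_nth_def)

section \<open>The bracket operators \<open>s\<^sub>r\<close>\<close>

lemma brk_append:
  "brk r (v @ w) i os rs = (case brk r v i os rs of (rs', ls') \<Rightarrow> brk r w (i + length v) (rev ls') rs')"
  by (induction v arbitrary: i os rs) (auto split: list.splits)

definition unmatched :: "nat \<Rightarrow> nat list \<Rightarrow> nat list \<times> nat list" where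
  "unmatched r v = brk r v 0 [] []"

lemma unmatched_snoc: "unmatched r (v @ [a]) =
   (if a = Suc r then (fst (unmatched r v), snd (unmatched r v) @ [length v])
    else if a = r then (if snd (unmatched r v) = [] then (fst (unmatched r v) @ [length v], [])
                        else (fst (unmatched r v), butlast (snd (unmatched r v))))
    else unmatched r v)"
  unfolding unmatched_def brk_append
  by (cases "brk r v 0 [] []") (auto split: list.splits simp: butlast_rev[symmetric] rev_swap)

text \<open>The \<open>k\<close>-th unmatched letter \<open>r + 1\<close> (counting from \<open>0\<close>) of a matched word sits at the last
  position at which the prefix depth equals \<open>k\<close>.\<close>
definition unmatched_open :: "nat \<Rightarrow> nat list \<Rightarrow> nat \<Rightarrow> nat \<Rightarrow> bool" where
  "unmatched_open r v k p \<longleftrightarrow> p < length v \<and> depth r (take p v) = int k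
       \<and> (\<forall>i. p < i \<and> i \<le> length v \<longrightarrow> depth r (take i v) > int k)"

lemma unmatched_open_snoc:
  assumes "unmatched_open r v k p" "depth r v + paren r a > int k"
  shows "unmatched_open r (v @ [a]) k p"
  using assms by (auto simp: unmatched_open_def le_Suc_eq)

lemma unmatched_open_snoc_new:
  "depth r v = int k \<Longrightarrow> unmatched_open r (v @ [Suc r]) k (length v)"
  by (auto simp: unmatched_open_def paren_def le_Suc_eq)

lemma unmatched_if_matched:
  assumes "matched r v"
  shows "fst (unmatched r v) = [] \<and> length (snd (unmatched r v)) = nat (depth r v) \<and>
    (\<forall>k < length (snd (unmatched r v)). unmatched_open r v k (snd (unmatched r v) ! k))"
  using assms
proof (induction v rule: rev_induct)
  case Nil
  then show ?case by (simp add: unmatched_def)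
next
  case (snoc a v)
  from snoc.prems have "matched r v" and nonneg: "depth r v + paren r a \<ge> 0"
    by (auto simp: matched_snoc)
  with snoc.IH obtain S where U: "unmatched r v = ([], S)" and lenS: "length S = nat (depth r v)"
    and opens: "\<And>k. k < length S \<Longrightarrow> unmatched_open r v k (S ! k)"
    by (cases "unmatched r v") auto
  have "depth r v \<ge> 0" using \<open>matched r v\<close> by (rule matched_depth_nonneg)
  have keep: "unmatched_open r (v @ [a]) k (S ! k)"
    if "k < length S" "int k < depth r v + paren r a" for k
    using that opens[of k] unmatched_open_snoc by simp
  consider "a = Suc r" | "a = r" | "a \<noteq> Suc r" "a \<noteq> r" by blast
  then show ?case
  proof cases
    case 1
    then have "unmatched r (v @ [a]) = ([], S @ [length v])" using U by (simp add: unmatched_snoc)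
    moreover have "unmatched_open r (v @ [a]) (length S) (length v)"
      using 1 lenS \<open>depth r v \<ge> 0\<close> unmatched_open_snoc_new by simp
    ultimately show ?thesis using 1 lenS keep \<open>depth r v \<ge> 0\<close>
      by (auto simp: nth_append paren_def nat_add_distrib less_Suc_eq)
  next
    case 2
    then have "S \<noteq> []" using lenS nonneg by (auto simp: paren_def)
    then have "unmatched r (v @ [a]) = ([], butlast S)" using 2 U by (simp add: unmatched_snoc)
    then show ?thesis using 2 lenS keep \<open>depth r v \<ge> 0\<close>
      by (auto simp: nth_butlast paren_def nat_diff_distrib)
  next
    case 3
    then show ?thesis using U lenS keep by (simp add: unmatched_snoc paren_def)
  qed
qed

lemma unmatched_open_unique: "unmatched_open r v k p \<Longrightarrow> unmatched_open r v k p' \<Longrightarrow> p = p'"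
  unfolding unmatched_open_def by (metis linorder_neqE_nat less_imp_le order_less_irrefl)

lemma unmatched_open_letter: "unmatched_open r v k p \<Longrightarrow> v ! p = Suc r"
  by (auto simp: unmatched_open_def depth_take_Suc paren_def split: if_splits
      dest!: spec[of _ "Suc p"])

lemma s_op_balanced:
  assumes "balanced r v"
  shows "s_op r v = v"
proof -
  have "unmatched r v = ([], [])"
    using unmatched_if_matched[of r v] assms by (cases "unmatched r v") auto
  then show ?thesis unfolding s_op_def unmatched_def by (simp add: map_nth)
qed

definition first_open :: "nat \<Rightarrow> nat list \<Rightarrow> nat" where
  "first_open r v = snd (unmatched r v) ! 0"

lemma s_op_depth_one:
  assumes "matched r v" "depth r v = 1"
  shows "unmatched_open r v 0 (first_open r v)" and "s_op r v = v[first_open r v := r]"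
proof -
  obtain p where U: "unmatched r v = ([], [p])"
    using unmatched_if_matched[OF assms(1)] assms(2) by (cases "unmatched r v") (auto simp: length_Suc_conv)
  then show "unmatched_open r v 0 (first_open r v)"
    using unmatched_if_matched[OF assms(1)] by (auto simp: first_open_def)
  have "s_op r v = map (\<lambda>q. if q = p then r else v ! q) [0..<length v]"
    using U unfolding s_op_def unmatched_def by simp
  also have "\<dots> = v[p := r]" by (rule nth_equalityI) (auto simp: nth_list_update)
  finally show "s_op r v = v[first_open r v := r]" using U by (simp add: first_open_def)
qed

lemma length_s_op[simp]: "length (s_op r v) = length v"
  by (simp add: s_op_def split: prod.split)

lemma nth_s_op:
  "p < length v \<Longrightarrow> s_op r v ! p =
    (if p \<in> set (fst (unmatched r v) @ snd (unmatched r v))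
     then (if length (filter (\<lambda>q. q < p) (fst (unmatched r v) @ snd (unmatched r v)))
              < length (snd (unmatched r v)) then r else Suc r)
     else v ! p)"
  by (simp add: s_op_def unmatched_def split: prod.split)

lemma brk_paren_cong:
  "map (paren r) v = map (paren r) v' \<Longrightarrow> brk r v i os rs = brk r v' i os rs"
proof (induction v arbitrary: v' i os rs)
  case (Cons a v)
  then obtain a' w where "v' = a' # w" "paren r a = paren r a'" "map (paren r) v = map (paren r) w"
    by (cases v') auto
  moreover from this(2) have "a = Suc r \<longleftrightarrow> a' = Suc r" "a = r \<longleftrightarrow> a' = r"
    by (auto simp: paren_def split: if_splits)
  ultimately show ?case using Cons.IH by (simp split: list.split)
qed simp

lemma brk_positions:
  "set (fst (brk r w i os rs)) \<union> set (snd (brk r w i os rs)) \<subseteq>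
    set os \<union> set rs \<union> {p. i \<le> p \<and> p < i + length w \<and> paren r (w ! (p - i)) \<noteq> 0}"
proof (induction w arbitrary: i os rs)
  case (Cons a w)
  have shift: "{p. Suc i \<le> p \<and> p < Suc i + length w \<and> paren r (w ! (p - Suc i)) \<noteq> 0} \<subseteq>
      {p. i \<le> p \<and> p < i + length (a # w) \<and> paren r ((a # w) ! (p - i)) \<noteq> 0}"
    by (auto simp: nth_Cons' Suc_diff_Suc)
  have self: "paren r a \<noteq> 0 \<Longrightarrow> i \<in> {p. i \<le> p \<and> p < i + length (a # w) \<and> paren r ((a # w) ! (p - i)) \<noteq> 0}"
    by simp
  show ?case
  proof (cases "a = Suc r")
    case True
    then have "brk r (a # w) i os rs = brk r w (Suc i) (i # os) rs" "paren r a \<noteq> 0"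
      by (simp_all add: paren_def)
    then show ?thesis using Cons.IH[of "Suc i" "i # os" rs] shift self by auto
  next
    case False
    show ?thesis
    proof (cases "a = r")
      case True
      show ?thesis
      proof (cases os)
        case Nil
        then have "brk r (a # w) i os rs = brk r w (Suc i) [] (rs @ [i])" "paren r a \<noteq> 0"
          using \<open>a = r\<close> by (simp_all add: paren_def)
        then show ?thesis using Cons.IH[of "Suc i" "[]" "rs @ [i]"] shift self by auto
      next
        case (Cons b os')
        then have "brk r (a # w) i os rs = brk r w (Suc i) os' rs" using \<open>a = r\<close> by simp
        then show ?thesis using Cons Cons.IH[of "Suc i" os' rs] shift by auto
      qed
    next
      case False
      then have "brk r (a # w) i os rs = brk r w (Suc i) os rs" using \<open>a \<noteq> Suc r\<close> by simp
      then show ?thesis using Cons.IH[of "Suc i" os rs] shift by auto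
    qed
  qed
qed auto

lemma unmatched_positions:
  "p \<in> set (fst (unmatched r v) @ snd (unmatched r v)) \<Longrightarrow> p < length v \<and> paren r (v ! p) \<noteq> 0"
  using brk_positions[of r v 0 "[]" "[]"] by (auto simp: unmatched_def)

lemma nth_s_op_neutral:
  assumes "p < length v" "paren r (v ! p) = 0"
  shows "s_op r v ! p = v ! p"
proof -
  have "p \<notin> set (fst (unmatched r v) @ snd (unmatched r v))"
    using unmatched_positions assms(2) by blast
  then show ?thesis using assms(1) by (simp only: nth_s_op if_False)
qed

lemma paren_nth_s_op: "p < length v \<Longrightarrow> paren r (v ! p) \<noteq> 0 \<Longrightarrow> s_op r v ! p \<in> {r, Suc r}"
  by (auto simp: nth_s_op paren_def split: if_splits)

lemma nth_s_op_paren_cong: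
  assumes "map (paren r) v = map (paren r) v'" "p < length v" "paren r (v ! p) \<noteq> 0"
  shows "s_op r v ! p = s_op r v' ! p"
proof -
  have "length v' = length v" using assms(1) by (metis length_map)
  moreover have "paren r (v' ! p) = paren r (v ! p)"
    using assms(1,2) \<open>length v' = length v\<close> by (metis nth_map)
  then have "v' ! p = v ! p" using assms(3) by (auto simp: paren_def split: if_splits)
  ultimately show ?thesis
    using assms brk_paren_cong[OF assms(1)] by (simp add: nth_s_op unmatched_def)
qed

lemma paren_far: "Suc r < r' \<or> Suc r' < r \<Longrightarrow> paren r a \<noteq> 0 \<Longrightarrow> paren r' a = 0"
  by (auto simp: paren_def split: if_splits)

lemma paren_s_op_far:
  assumes "Suc r < r' \<or> Suc r' < r"
  shows "map (paren r') (s_op r v) = map (paren r') v"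
proof (rule nth_equalityI)
  fix p assume "p < length (map (paren r') (s_op r v))"
  then have "p < length v" by simp
  then show "map (paren r') (s_op r v) ! p = map (paren r') v ! p"
    using nth_s_op_neutral[of p v r] paren_nth_s_op[of p v r] paren_far[OF assms, of "v ! p"]
      paren_far[OF assms, of r] paren_far[OF assms, of "Suc r"]
    by (cases "paren r (v ! p) = 0") (auto simp: paren_def)
qed simp

lemma nth_s_op_s_op_far:
  assumes far: "Suc r1 < r2 \<or> Suc r2 < r1" and p: "p < length v"
  shows "s_op r1 (s_op r2 v) ! p = (if paren r1 (v ! p) \<noteq> 0 then s_op r1 v ! p else s_op r2 v ! p)"
proof (cases "paren r1 (v ! p) = 0")
  case True
  have "paren r1 (s_op r2 v ! p) = 0"
    using True nth_s_op_neutral[OF p, of r2] paren_nth_s_op[OF p, of r2] paren_far[of r2 r1] far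
    by (cases "paren r2 (v ! p) = 0") (auto simp: paren_def)
  then show ?thesis using True nth_s_op_neutral[of p "s_op r2 v" r1] p by simp
next
  case False
  then have "paren r2 (v ! p) = 0" using paren_far far by blast
  then have "s_op r2 v ! p = v ! p" by (rule nth_s_op_neutral[OF p])
  then show ?thesis
    using False nth_s_op_paren_cong[of r1 "s_op r2 v" v p] paren_s_op_far[of r2 r1 v] far p by auto
qed

lemma s_op_commute:
  assumes "Suc r1 < r2 \<or> Suc r2 < r1"
  shows "s_op r1 (s_op r2 v) = s_op r2 (s_op r1 v)"
proof (rule nth_equalityI)
  fix p assume "p < length (s_op r1 (s_op r2 v))"
  then have p: "p < length v" by simp
  have sym: "Suc r2 < r1 \<or> Suc r1 < r2" using assms by auto
  show "s_op r1 (s_op r2 v) ! p = s_op r2 (s_op r1 v) ! p"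
    using nth_s_op_s_op_far[OF assms p] nth_s_op_s_op_far[OF sym p] paren_far[OF assms, of "v ! p"]
      nth_s_op_neutral[OF p, of r1] nth_s_op_neutral[OF p, of r2]
    by auto
qed simp

lemma brk_shift:
  assumes "\<forall>p \<in> set os \<union> set rs. p < i"
  shows "brk r w (i + d) (map f os) (map f rs) =
    map_prod (map (\<lambda>p. if p < i then f p else p + d)) (map (\<lambda>p. if p < i then f p else p + d))
      (brk r w i os rs)"
  using assms
proof (induction w arbitrary: i os rs f)
  case (Cons a w)
  define h where "h p = (if p < i then f p else p + d)" for p
  have fh: "map f os = map h os" "map f rs = map h rs" using Cons.prems by (auto simp: h_def)
  have "(\<lambda>p. if p < Suc i then h p else p + d) = h" by (auto simp: h_def)
  then have IH: "\<forall>p \<in> set os' \<union> set rs'. p < Suc i \<Longrightarrow>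
      brk r w (Suc (i + d)) (map h os') (map h rs') = map_prod (map h) (map h) (brk r w (Suc i) os' rs')"
    for os' rs' using Cons.IH[where i = "Suc i" and os = os' and rs = rs' and f = h] by simp
  have hi: "h i = i + d" by (simp add: h_def)
  show ?case
    unfolding h_def[symmetric] fh using Cons.prems IH[of "i # os" rs] IH[of "[]" "rs @ [i]"]
      IH[of "tl os" rs] IH[of os rs] hi
    by (cases os) (auto simp: less_Suc_eq)
qed (auto simp flip: rev_map intro!: map_cong)

lemma unmatched_insert_nth:
  assumes "k \<le> length v" "paren r a = 0"
  shows "unmatched r (insert_nth k a v) =
    map_prod (map (\<lambda>p. if p < k then p else Suc p)) (map (\<lambda>p. if p < k then p else Suc p)) (unmatched r v)"
proof -
  obtain rs ls where pre: "brk r (take k v) 0 [] [] = (rs, ls)" by fastforce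
  then have "\<forall>p \<in> set (rev ls) \<union> set rs. p < k"
    using brk_positions[of r "take k v" 0 "[]" "[]"] assms(1) by auto
  moreover have "a \<noteq> Suc r" "a \<noteq> r" using assms(2) by (auto simp: paren_def)
  moreover have "(\<lambda>p. if p < k then id p else p + 1) = (\<lambda>p. if p < k then p else Suc p)" by auto
  ultimately show ?thesis
    using brk_shift[of "rev ls" rs k r "drop k v" 1 id] pre assms(1)
      brk_append[of r "take k v" "a # drop k v"] brk_append[of r "take k v" "drop k v"]
    by (simp add: unmatched_def insert_nth_def min.absorb2)
qed

lemma nth_s_op_insert_nth_shift:
  assumes k: "k \<le> length v" and a: "paren r a = 0" and p: "p < length v"
  defines "sh \<equiv> \<lambda>p. if p < k then p else Suc p"
  shows "s_op r (insert_nth k a v) ! sh p = s_op r v ! p"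
proof -
  have sh_less: "sh p < sh p' \<longleftrightarrow> p < p'" for p p' by (auto simp: sh_def)
  then have sh_eq: "sh p = sh p' \<longleftrightarrow> p = p'" for p p' by (metis linorder_neqE_nat order_less_irrefl)
  obtain rs ls where U: "unmatched r v = (rs, ls)" by fastforce
  then have U': "unmatched r (insert_nth k a v) = (map sh rs, map sh ls)"
    using unmatched_insert_nth[OF k a] by (simp add: sh_def)
  have "sh p \<in> set (map sh rs @ map sh ls) \<longleftrightarrow> p \<in> set (rs @ ls)"
    using sh_eq by auto
  moreover have "length (filter (\<lambda>q. q < sh p) (map sh rs @ map sh ls)) =
      length (filter (\<lambda>q. q < p) (rs @ ls))"
    by (simp add: filter_map comp_def sh_less)
  moreover have "insert_nth k a v ! sh p = v ! p"
    using p k by (auto simp: sh_def nth_insert_nth)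
  moreover have "sh p < length (insert_nth k a v)" using p k by (simp add: sh_def)
  ultimately show ?thesis
    using p by (simp only: nth_s_op U U' fst_conv snd_conv length_map)
qed

lemma nth_s_op_insert_nth_self:
  assumes k: "k \<le> length v" and a: "paren r a = 0"
  shows "s_op r (insert_nth k a v) ! k = a"
proof -
  have "k \<notin> set (fst (unmatched r (insert_nth k a v)) @ snd (unmatched r (insert_nth k a v)))"
    using unmatched_insert_nth[OF k a] by (cases "unmatched r v") auto
  moreover have "insert_nth k a v ! k = a" using k by (simp add: nth_insert_nth)
  ultimately show ?thesis using k by (simp only: nth_s_op length_insert_nth if_False)
qed

lemma s_op_insert_nth:
  assumes k: "k \<le> length v" and a: "paren r a = 0"
  shows "s_op r (insert_nth k a v) = insert_nth k a (s_op r v)"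
proof (rule nth_equalityI)
  fix q assume "q < length (s_op r (insert_nth k a v))"
  then have q: "q \<le> length v" using k by simp
  show "s_op r (insert_nth k a v) ! q = insert_nth k a (s_op r v) ! q"
  proof (cases "q = k")
    case True
    then show ?thesis using nth_s_op_insert_nth_self[OF k a] k by (simp add: nth_insert_nth)
  next
    case False
    define p where "p = (if q < k then q else q - 1)"
    have "q = (if p < k then p else Suc p)" "p < length v" using q k False by (auto simp: p_def)
    then show ?thesis
      using nth_s_op_insert_nth_shift[OF k a, of p] k q False by (simp add: nth_insert_nth p_def)
  qed
qed (use k in simp)

section \<open>Lowering chains\<close>

fun s_chain :: "nat \<Rightarrow> nat list \<Rightarrow> nat \<Rightarrow> nat list" where
  "s_chain ofs X 0 = X"
| "s_chain ofs X (Suc k) = s_op (ofs + Suc k) (s_chain ofs X k)"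

definition chain_pos :: "nat \<Rightarrow> nat list \<Rightarrow> nat \<Rightarrow> nat" where
  "chain_pos ofs X l = first_open (ofs + l) (s_chain ofs X (l - 1))"

text \<open>Lowering the letter \<open>ofs + l + 1\<close> at position \<open>p l\<close> to \<open>ofs + l\<close> changes the prefix depths
  beyond \<open>p l\<close> by \<open>-2\<close> at \<open>ofs + l\<close> and by \<open>+1\<close> at \<open>ofs + l \<plusminus> 1\<close>.\<close>
definition depth_shift :: "(nat \<Rightarrow> nat) \<Rightarrow> nat \<Rightarrow> nat \<Rightarrow> nat \<Rightarrow> int" where
  "depth_shift p k j i = (if j \<le> k \<and> p j < i then -2 else 0)
     + (if Suc j \<le> k \<and> p (Suc j) < i then 1 else 0)
     + (if 2 \<le> j \<and> j \<le> Suc k \<and> p (j - 1) < i then 1 else 0)"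

lemma depth_shift_0[simp]: "1 \<le> j \<Longrightarrow> depth_shift p 0 j i = 0"
  by (simp add: depth_shift_def)

lemma depth_shift_Suc:
  assumes "1 \<le> j"
  shows "depth_shift p (Suc k) j i = depth_shift p k j i +
     (if p (Suc k) < i then paren (ofs + j) (ofs + Suc k) - paren (ofs + j) (Suc (ofs + Suc k)) else 0)"
  using assms by (auto simp: depth_shift_def paren_def not_less_eq_eq le_Suc_eq)

lemma length_s_chain[simp]: "length (s_chain ofs v k) = length v"
  by (induction k) auto

lemma s_chain_insert_nth:
  assumes "k \<le> length v" "\<And>j. 1 \<le> j \<Longrightarrow> j \<le> m \<Longrightarrow> paren (ofs + j) a = 0"
  shows "s_chain ofs (insert_nth k a v) m = insert_nth k a (s_chain ofs v m)"
  using assms(2)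
proof (induction m)
  case (Suc m)
  then have "paren (ofs + Suc m) a = 0" using Suc.prems[of "Suc m"] by simp
  then show ?case using Suc s_op_insert_nth[of k "s_chain ofs v m"] assms(1) by simp
qed simp

lemma s_op_s_chain_commute:
  "r < ofs \<Longrightarrow> s_op r (s_chain ofs v k) = s_chain ofs (s_op r v) k"
proof (induction k)
  case (Suc k)
  then show ?case using s_op_commute[of r "ofs + Suc k" "s_chain ofs v k"] by simp
qed simp

lemma s_chain_commute:
  "o1 + k1 < o2 \<Longrightarrow> s_chain o1 (s_chain o2 v k2) k1 = s_chain o2 (s_chain o1 v k1) k2"
  by (induction k1) (simp_all add: s_op_s_chain_commute)

lemma paren_s_chain_far:
  "r < ofs \<or> ofs + Suc k < r \<Longrightarrow> map (paren r) (s_chain ofs v k) = map (paren r) v"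
  by (induction k) (auto simp: paren_s_op_far)

lemma nth_s_chain:
  assumes "q < length v"
  shows "s_chain ofs v k ! q = v ! q \<or> v ! q \<in> {Suc ofs..ofs + Suc k} \<and> s_chain ofs v k ! q \<in> {Suc ofs..ofs + Suc k}"
proof (induction k)
  case (Suc k)
  let ?w = "s_chain ofs v k" and ?r = "ofs + Suc k"
  show ?case
  proof (cases "paren ?r (?w ! q) = 0")
    case True
    then show ?thesis using Suc nth_s_op_neutral[of q ?w ?r] assms by auto
  next
    case False
    then have "?w ! q \<in> {?r, Suc ?r}" "s_op ?r ?w ! q \<in> {?r, Suc ?r}"
      using paren_nth_s_op[of q ?w ?r] assms by (auto simp: paren_def split: if_splits)
    then show ?thesis using Suc by auto
  qed
qed simp

lemma set_s_chain: "set (s_chain ofs v k) \<subseteq> set v \<union> {Suc ofs..ofs + Suc k}"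
proof
  fix b assume "b \<in> set (s_chain ofs v k)"
  then obtain q where "q < length v" "b = s_chain ofs v k ! q" by (auto simp: in_set_conv_nth)
  then show "b \<in> set v \<union> {Suc ofs..ofs + Suc k}" using nth_s_chain[of q v ofs k] by auto
qed

lemma s_chain_single: "s_chain ofs [Suc ofs] k = [ofs + Suc k]"
  by (induction k) (simp_all add: s_op_def)

lemma nth_iterated_update:
  fixes C :: "nat \<Rightarrow> 'a list"
  assumes upd: "\<And>l. 1 \<le> l \<Longrightarrow> l \<le> k \<Longrightarrow> C l = (C (l - 1))[p l := f l]"
    and dec: "\<And>l l'. 1 \<le> l \<Longrightarrow> l < l' \<Longrightarrow> l' \<le> k \<Longrightarrow> p l' < p l"
  shows length_iterated_update: "length (C k) = length (C 0)"
    and nth_iterated_update_pos: "\<And>l. 1 \<le> l \<Longrightarrow> l \<le> k \<Longrightarrow> p l < length (C 0) \<Longrightarrow> C k ! p l = f l"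
    and nth_iterated_update_other: "\<And>q. \<forall>l. 1 \<le> l \<longrightarrow> l \<le> k \<longrightarrow> q \<noteq> p l \<Longrightarrow> C k ! q = C 0 ! q"
proof -
  have len: "length (C k') = length (C 0)" if "k' \<le> k" for k'
    using that
  proof (induction k')
    case (Suc k')
    then show ?case using upd[of "Suc k'"] by simp
  qed simp
  show "length (C k) = length (C 0)" using len[of k] by simp
  have "C k' ! q = C 0 ! q" if "k' \<le> k" "\<forall>l. 1 \<le> l \<longrightarrow> l \<le> k' \<longrightarrow> q \<noteq> p l" for k' q
    using that
  proof (induction k')
    case (Suc k')
    then have "p (Suc k') \<noteq> q" by auto
    then show ?case using Suc upd[of "Suc k'"] by simp
  qed simp
  then show "\<And>q. \<forall>l. 1 \<le> l \<longrightarrow> l \<le> k \<longrightarrow> q \<noteq> p l \<Longrightarrow> C k ! q = C 0 ! q" by blast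
  have "C k' ! p l = f l" if "1 \<le> l" "l \<le> k'" "k' \<le> k" "p l < length (C 0)" for l k'
    using that
  proof (induction k')
    case (Suc k')
    then show ?case
      using dec[of l "Suc k'"] len[of k'] upd[of "Suc k'"] by (cases "l = Suc k'") simp_all
  qed simp
  then show "\<And>l. 1 \<le> l \<Longrightarrow> l \<le> k \<Longrightarrow> p l < length (C 0) \<Longrightarrow> C k ! p l = f l" by blast
qed

definition block_balanced :: "nat \<Rightarrow> nat \<Rightarrow> nat list \<Rightarrow> bool" where
  "block_balanced ofs eta v \<longleftrightarrow> (\<forall>j. 1 \<le> j \<longrightarrow> j < eta \<longrightarrow> balanced (ofs + j) v)"

text \<open>\<open>X\<close> followed by the first letter \<open>ofs + 1\<close> of the block \<open>{ofs + 1..ofs + eta}\<close> is balanced for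
  all \<open>s\<^sub>r\<close> inside the block (\<open>almost_balanced_if_snoc\<close>). On such \<open>X\<close> the chain
  \<open>s\<^bsub>ofs+k\<^esub> \<cdots> s\<^bsub>ofs+1\<^esub>\<close> lowers, in step \<open>l\<close>, one letter \<open>ofs + l + 1\<close> at position \<open>p l\<close> to
  \<open>ofs + l\<close>, and these positions decrease.\<close>
locale almost_balanced =
  fixes ofs eta :: nat and X :: "nat list"
  assumes depth_one: "2 \<le> eta \<Longrightarrow> matched (Suc ofs) X \<and> depth (Suc ofs) X = 1"
    and balanced_above: "\<And>j. 2 \<le> j \<Longrightarrow> j < eta \<Longrightarrow> balanced (ofs + j) X"
begin

abbreviation "C \<equiv> s_chain ofs X"
abbreviation "p \<equiv> chain_pos ofs X"

definition chain_inv :: "nat \<Rightarrow> bool" where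
  "chain_inv k \<longleftrightarrow>
   (\<forall>j i. 1 \<le> j \<longrightarrow> j < eta \<longrightarrow>
      depth (ofs + j) (take i (C k)) = depth (ofs + j) (take i X) + depth_shift p k j i) \<and>
   (\<forall>l. 1 \<le> l \<longrightarrow> l \<le> k \<longrightarrow> unmatched_open (ofs + l) (C (l - 1)) 0 (p l) \<and> p l < length X \<and>
      X ! p l = Suc (ofs + l) \<and> C l = (C (l - 1))[p l := ofs + l]) \<and>
   (\<forall>l l'. 1 \<le> l \<longrightarrow> l < l' \<longrightarrow> l' \<le> k \<longrightarrow> p l' < p l)"

lemma chain_invD:
  assumes "chain_inv k"
  shows "\<And>j i. 1 \<le> j \<Longrightarrow> j < eta \<Longrightarrow>
      depth (ofs + j) (take i (C k)) = depth (ofs + j) (take i X) + depth_shift p k j i"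
    and "\<And>l. 1 \<le> l \<Longrightarrow> l \<le> k \<Longrightarrow> unmatched_open (ofs + l) (C (l - 1)) 0 (p l)"
    and "\<And>l. 1 \<le> l \<Longrightarrow> l \<le> k \<Longrightarrow> p l < length X"
    and "\<And>l. 1 \<le> l \<Longrightarrow> l \<le> k \<Longrightarrow> X ! p l = Suc (ofs + l)"
    and "\<And>l. 1 \<le> l \<Longrightarrow> l \<le> k \<Longrightarrow> C l = (C (l - 1))[p l := ofs + l]"
    and "\<And>l l'. 1 \<le> l \<Longrightarrow> l < l' \<Longrightarrow> l' \<le> k \<Longrightarrow> p l' < p l"
  using assms unfolding chain_inv_def by blast+

lemma chain_inv_nth:
  assumes "chain_inv k"
  shows "length (C k) = length X"
    and "\<And>l. 1 \<le> l \<Longrightarrow> l \<le> k \<Longrightarrow> C k ! p l = ofs + l"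
    and "\<And>q. (\<forall>l. 1 \<le> l \<longrightarrow> l \<le> k \<longrightarrow> q \<noteq> p l) \<Longrightarrow> C k ! q = X ! q"
proof -
  note upd = chain_invD(5)[OF assms] and dec = chain_invD(6)[OF assms]
  show "length (C k) = length X" using length_iterated_update[of k C p, OF upd dec] by simp
  show "C k ! p l = ofs + l" if "1 \<le> l" "l \<le> k" for l
    using nth_iterated_update_pos[of k C p, OF upd dec that] chain_invD(3)[OF assms that] by simp
  show "C k ! q = X ! q" if "\<forall>l. 1 \<le> l \<longrightarrow> l \<le> k \<longrightarrow> q \<noteq> p l" for q
    using nth_iterated_update_other[of k C p, OF upd dec that] by simp
qed

lemma chain_step:
  assumes inv: "chain_inv k" and k: "Suc k < eta"
  defines "r \<equiv> ofs + Suc k"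
  shows "unmatched_open r (C k) 0 (p (Suc k))"
    and "C (Suc k) = (C k)[p (Suc k) := r]"
    and "X ! p (Suc k) = Suc r"
    and "\<And>l. 1 \<le> l \<Longrightarrow> l \<le> k \<Longrightarrow> p (Suc k) < p l"
proof -
  note walk = chain_invD(1)[OF inv] and dec = chain_invD(6)[OF inv] and nth = chain_inv_nth[OF inv]
  have walk_r: "depth r (take i (C k)) = depth r (take i X) + (if 1 \<le> k \<and> p k < i then 1 else 0)" for i
    using walk[of "Suc k" i] k unfolding r_def by (simp add: depth_shift_def)
  have X_r: "matched r X" "depth r X = (if k = 0 then 1 else 0)"
    using depth_one balanced_above[of "Suc k"] k unfolding r_def by (cases k; simp)+
  have "matched r (C k)"
    using X_r(1) walk_r nth(1) by (auto simp: matched_def)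
  moreover have "depth r (C k) = 1"
    using walk_r[of "length X"] X_r(2) chain_invD(3)[OF inv, of k] nth(1) by auto
  ultimately show opn: "unmatched_open r (C k) 0 (p (Suc k))"
    and upd: "C (Suc k) = (C k)[p (Suc k) := r]"
    using s_op_depth_one[of r "C k"] by (simp_all add: chain_pos_def r_def)
  have letter: "C k ! p (Suc k) = Suc r" using unmatched_open_letter[OF opn] .
  have below_last: "p (Suc k) < p k" if "1 \<le> k"
  proof -
    have "p (Suc k) < length X" using opn nth(1) by (simp add: unmatched_open_def)
    then have "depth r (take (p (Suc k)) X) \<ge> 0" using X_r(1) by (simp add: matched_def)
    moreover have "depth r (take (p (Suc k)) (C k)) = 0" using opn by (simp add: unmatched_open_def)
    ultimately have "\<not> p k < p (Suc k)" using walk_r[of "p (Suc k)"] that by auto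
    moreover have "p (Suc k) \<noteq> p k" using nth(2)[of k] letter that unfolding r_def by auto
    ultimately show ?thesis by simp
  qed
  show below: "p (Suc k) < p l" if "1 \<le> l" "l \<le> k" for l
    using below_last dec[of l k] that by (cases "l = k") auto
  show "X ! p (Suc k) = Suc r"
    using nth(3)[of "p (Suc k)"] below letter by force
qed

lemma chain_inv_Suc:
  assumes inv: "chain_inv k" and k: "Suc k < eta"
  shows "chain_inv (Suc k)"
proof -
  note step = chain_step[OF inv k]
  have "p (Suc k) < length X"
    using step(1) chain_inv_nth(1)[OF inv] by (simp add: unmatched_open_def)
  have "depth (ofs + j) (take i (C (Suc k))) = depth (ofs + j) (take i X) + depth_shift p (Suc k) j i"
    if "1 \<le> j" "j < eta" for j i
    using chain_invD(1)[OF inv that] step(2,3) \<open>p (Suc k) < length X\<close> chain_inv_nth(1)[OF inv]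
      chain_inv_nth(3)[OF inv, of "p (Suc k)"] unmatched_open_letter[OF step(1)]
    by (simp add: depth_take_list_update depth_shift_Suc[OF that(1), where ofs = ofs])
  moreover have "1 \<le> l \<Longrightarrow> l \<le> Suc k \<Longrightarrow> unmatched_open (ofs + l) (C (l - 1)) 0 (p l) \<and>
      p l < length X \<and> X ! p l = Suc (ofs + l) \<and> C l = (C (l - 1))[p l := ofs + l]" for l
    using chain_invD(2-5)[OF inv, of l] step \<open>p (Suc k) < length X\<close> by (cases "l = Suc k") auto
  moreover have "1 \<le> l \<Longrightarrow> l < l' \<Longrightarrow> l' \<le> Suc k \<Longrightarrow> p l' < p l" for l l'
    using chain_invD(6)[OF inv, of l l'] step(4)[of l] by (cases "l' = Suc k") auto
  ultimately show ?thesis unfolding chain_inv_def by blast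
qed

lemma chain_inv_holds: "k < eta \<Longrightarrow> chain_inv k"
  by (induction k) (auto simp: chain_inv_def[of 0] intro: chain_inv_Suc)

lemma length_chain: "k < eta \<Longrightarrow> length (C k) = length X"
  using chain_inv_nth(1)[OF chain_inv_holds] .

lemma depth_take_chain:
  "k < eta \<Longrightarrow> 1 \<le> j \<Longrightarrow> j < eta \<Longrightarrow>
    depth (ofs + j) (take i (C k)) = depth (ofs + j) (take i X) + depth_shift p k j i"
  using chain_invD(1)[OF chain_inv_holds] .

lemma chain_pos_open: "1 \<le> l \<Longrightarrow> l < eta \<Longrightarrow> unmatched_open (ofs + l) (C (l - 1)) 0 (p l)"
  using chain_invD(2)[OF chain_inv_holds[of l]] by simp

lemma chain_pos_less: "1 \<le> l \<Longrightarrow> l < eta \<Longrightarrow> p l < length X"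
  using chain_invD(3)[OF chain_inv_holds[of l]] by simp

lemma nth_X_chain_pos: "1 \<le> l \<Longrightarrow> l < eta \<Longrightarrow> X ! p l = Suc (ofs + l)"
  using chain_invD(4)[OF chain_inv_holds[of l]] by simp

lemma chain_pos_decreasing: "1 \<le> l \<Longrightarrow> l < l' \<Longrightarrow> l' < eta \<Longrightarrow> p l' < p l"
  using chain_invD(6)[OF chain_inv_holds[of l']] by simp

lemma nth_chain_pos: "k < eta \<Longrightarrow> 1 \<le> l \<Longrightarrow> l \<le> k \<Longrightarrow> C k ! p l = ofs + l"
  using chain_inv_nth(2)[OF chain_inv_holds] .

lemma nth_chain_unchanged:
  "k < eta \<Longrightarrow> \<forall>l. 1 \<le> l \<longrightarrow> l \<le> k \<longrightarrow> q \<noteq> p l \<Longrightarrow> C k ! q = X ! q"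
  using chain_inv_nth(3)[OF chain_inv_holds] .

lemma almost_balanced_depth:
  "1 \<le> j \<Longrightarrow> j < eta \<Longrightarrow> matched (ofs + j) X \<and> depth (ofs + j) X = (if j = 1 then 1 else 0)"
  using depth_one balanced_above[of j] by (cases "j = 1") auto

lemma depth_take_chain_before:
  assumes "1 \<le> j" "j < eta"
  shows "depth (ofs + j) (take i (C (j - 1))) =
    depth (ofs + j) (take i X) + (if 2 \<le> j \<and> p (j - 1) < i then 1 else 0)"
proof -
  have "\<not> j \<le> j - 1" "\<not> Suc j \<le> j - 1" using assms by auto
  then show ?thesis using depth_take_chain[of "j - 1" j i] assms by (simp add: depth_shift_def)
qed

lemma depth_take_top_Cons_chain:
  assumes "1 \<le> j" "j < eta"
  shows "depth (ofs + j) (take (Suc i) ((ofs + eta) # C (eta - 1))) =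
    depth (ofs + j) (take i (C (j - 1))) - (if p j < i then 2 else 0)
      + (if Suc j = eta \<or> p (Suc j) < i then 1 else 0)"
  using depth_take_chain[of "eta - 1" j i] depth_take_chain_before[OF assms, of i] assms
  by (auto simp: depth_shift_def paren_def)

lemma top_Cons_chain_balanced:
  assumes j: "1 \<le> j" "j < eta"
  shows "balanced (ofs + j) ((ofs + eta) # C (eta - 1))"
proof -
  let ?r = "ofs + j" and ?V = "\<lambda>i. depth (ofs + j) (take i (C (j - 1)))"
  have len: "length (C (j - 1)) = length X" "length (C (eta - 1)) = length X"
    using length_chain j by auto
  have opn: "unmatched_open ?r (C (j - 1)) 0 (p j)" and pj: "p j < length X"
    using chain_pos_open[OF j] chain_pos_less[OF j] .
  have "matched ?r (C (j - 1))"
    using almost_balanced_depth[OF j] depth_take_chain_before[OF j] len(1) by (simp add: matched_def)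
  moreover have "depth ?r (C (j - 1)) = 1"
    using almost_balanced_depth[OF j] depth_take_chain_before[OF j, of "length X"]
      chain_pos_less[of "j - 1"] j len(1) by auto
  ultimately have V_nonneg: "?V i \<ge> 0" and V_len: "?V (length X) = 1" for i
    using len(1) by (cases "i \<le> length X"; simp add: matched_def)+
  have V_pos: "?V i > 0" if "p j < i" for i
    using opn that len(1) V_len by (cases "i \<le> length X") (simp_all add: unmatched_open_def)
  have next_before: "Suc j = eta \<or> p (Suc j) < i" if "p j < i" for i
    using chain_pos_decreasing[OF j(1), of "Suc j"] that j(2) by (cases "Suc j < eta") auto
  have "depth ?r (take i ((ofs + eta) # C (eta - 1))) \<ge> 0" for i
  proof (cases i)
    case (Suc i')
    then show ?thesis
      using depth_take_top_Cons_chain[OF j, of i'] V_nonneg[of i'] V_pos[of i'] next_before[of i']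
      by (cases "p j < i'") auto
  qed simp
  moreover have "depth ?r ((ofs + eta) # C (eta - 1)) = 0"
    using depth_take_top_Cons_chain[OF j, of "length X"] V_len pj next_before len(2) by simp
  ultimately show ?thesis by (simp add: matched_def)
qed

lemma last_letter_cases:
  assumes X: "X = V @ [a]" and a: "ofs < a" "a \<le> ofs + eta"
  shows "a = Suc ofs \<or> a = Suc (Suc ofs)"
proof (rule ccontr)
  assume "\<not> (a = Suc ofs \<or> a = Suc (Suc ofs))"
  then obtain j where j: "2 \<le> j" "j < eta" "a = Suc (ofs + j)"
    using a by (auto intro!: that[of "a - Suc ofs"])
  then show False
    using balanced_above[OF j(1,2)] X by (auto simp: matched_snoc paren_def dest: matched_depth_nonneg)
qed

lemma chain_balanced_below:
  assumes "1 \<le> j" "Suc j < eta"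
  shows "balanced (ofs + j) (C (eta - 1))"
proof -
  have "paren (ofs + j) (ofs + eta) = 0" using assms(2) by (simp add: paren_def)
  then show ?thesis using top_Cons_chain_balanced[of j] assms by (simp add: matched_Cons_neutral)
qed

end

lemma almost_balanced_if_snoc:
  assumes "block_balanced ofs eta (X @ [Suc ofs])"
  shows "almost_balanced ofs eta X"
proof
  assume "2 \<le> eta"
  then show "matched (Suc ofs) X \<and> depth (Suc ofs) X = 1"
    using assms[unfolded block_balanced_def, rule_format, of 1] matched_snoc[of _ X "Suc ofs"]
    by (auto simp: paren_def)
next
  fix j assume j: "2 \<le> j" "j < eta"
  then have "balanced (ofs + j) (X @ [Suc ofs])" using assms by (simp add: block_balanced_def)
  moreover have "paren (ofs + j) (Suc ofs) = 0" using j by (simp add: paren_def)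
  ultimately show "balanced (ofs + j) X" using balanced_snoc_neutral by blast
qed

lemma almost_balanced_Cons_neutral:
  assumes "almost_balanced ofs eta (b # X)" "\<And>j. 1 \<le> j \<Longrightarrow> j < eta \<Longrightarrow> paren (ofs + j) b = 0"
  shows "almost_balanced ofs eta X"
proof
  assume "2 \<le> eta"
  then show "matched (Suc ofs) X \<and> depth (Suc ofs) X = 1"
    using almost_balanced.depth_one[OF assms(1)] assms(2)[of 1] by (simp add: matched_Cons_neutral)
next
  fix j assume "2 \<le> j" "j < eta"
  then show "balanced (ofs + j) X"
    using almost_balanced.balanced_above[OF assms(1), of j] assms(2)[of j] by (simp add: matched_Cons_neutral)
qed


text \<open>Applying \<open>\<chi>\<close> to \<open>X (ofs + 1)\<close> gives \<open>(ofs + eta) \<cdot> C X\<close>, whose last letter is again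
  \<open>ofs + 1\<close> (\<open>chain_last\<close>); the next application of \<open>\<chi>\<close> then lowers \<open>Y\<close>.\<close>
locale rotation = almost_balanced +
  fixes V :: "nat list" and a :: nat
  assumes X_snoc: "X = V @ [a]"
    and last_cases: "a = Suc ofs \<or> a = Suc (Suc ofs)"
    and last_le: "a \<le> ofs + eta"
begin

definition Y :: "nat list" where
  "Y = (ofs + eta) # butlast (C (eta - 1))"

abbreviation "q \<equiv> chain_pos ofs Y"

lemma eta_pos: "1 \<le> eta"
  using last_cases last_le by auto

lemma length_X: "length X = Suc (length V)"
  using X_snoc by simp

lemma length_Y: "length Y = length X"
  unfolding Y_def using length_chain[of "eta - 1"] eta_pos length_X by simp

lemma chain_pos_1_last: "2 \<le> eta \<Longrightarrow> a = Suc (Suc ofs) \<longleftrightarrow> p 1 = length V"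
proof
  assume "2 \<le> eta" "a = Suc (Suc ofs)"
  then have "unmatched_open (Suc ofs) X 0 (length V)"
    using depth_one X_snoc by (auto simp: unmatched_open_def paren_def le_Suc_eq)
  then show "p 1 = length V"
    using chain_pos_open[of 1] \<open>2 \<le> eta\<close> unmatched_open_unique by simp
next
  assume "2 \<le> eta" "p 1 = length V"
  then show "a = Suc (Suc ofs)" using nth_X_chain_pos[of 1] X_snoc by simp
qed

lemma chain_last: "C (eta - 1) ! length V = Suc ofs"
proof (cases "a = Suc ofs")
  case True
  have "length V \<noteq> p l" if "1 \<le> l" "l \<le> eta - 1" for l
  proof -
    have "X ! p l = Suc (ofs + l)" using nth_X_chain_pos[of l] that eta_pos by simp
    moreover have "X ! length V = Suc ofs" using X_snoc True by simp
    ultimately show ?thesis using that by auto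
  qed
  then show ?thesis using nth_chain_unchanged[of "eta - 1" "length V"] eta_pos X_snoc True by simp
next
  case False
  then have "a = Suc (Suc ofs)" "2 \<le> eta" using last_cases last_le by auto
  then show ?thesis using chain_pos_1_last nth_chain_pos[of "eta - 1" 1] by simp
qed

lemma almost_balanced_Y: "almost_balanced ofs eta Y"
proof (rule almost_balanced_if_snoc)
  have len: "length (C (eta - 1)) = Suc (length V)" using length_X by simp
  then have ne: "C (eta - 1) \<noteq> []" by (auto simp del: length_s_chain)
  with len have "last (C (eta - 1)) = Suc ofs"
    using chain_last by (simp add: last_conv_nth del: length_s_chain)
  with ne have "C (eta - 1) = butlast (C (eta - 1)) @ [Suc ofs]" by (metis append_butlast_last_id)
  then have "Y @ [Suc ofs] = (ofs + eta) # C (eta - 1)" by (simp add: Y_def)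
  then show "block_balanced ofs eta (Y @ [Suc ofs])"
    using top_Cons_chain_balanced by (simp add: block_balanced_def)
qed

sublocale Y: almost_balanced ofs eta Y
  by (rule almost_balanced_Y)

text \<open>\<open>q j \<le> p (j + 1) + 1\<close>, with the conventions \<open>q 0 = |X|\<close> and \<open>p \<eta> = -1\<close>. The prepended top
  letter shifts positions in \<open>Y\<close> by one against those in \<open>X\<close>.\<close>
definition interlaced :: "nat \<Rightarrow> bool" where
  "interlaced j \<longleftrightarrow> (if j = 0 then length X else q j) \<le> (if Suc j = eta then 0 else Suc (p (Suc j)))"

context
  fixes j :: nat
  assumes j: "Suc j < eta"
begin

lemma depth_take_Y_chain:
  assumes i: "1 \<le> i" "i \<le> length X"
  shows "depth (ofs + Suc j) (take i (s_chain ofs Y j)) =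
    (if Suc (Suc j) = eta then 1 else 0) + depth (ofs + Suc j) (take (i - 1) X)
      - (if p (Suc j) < i - 1 then 2 else 0)
      + (if Suc (Suc j) < eta \<and> p (Suc (Suc j)) < i - 1 then 1 else 0)
      + (if 1 \<le> j \<and> p j < i - 1 then 1 else 0)
      + (if 1 \<le> j \<and> q j < i then 1 else 0)"
proof -
  let ?r = "ofs + Suc j"
  have "take i Y = (ofs + eta) # take (i - 1) (C (eta - 1))"
    using i length_X by (cases i) (simp_all add: Y_def take_butlast)
  then have "depth ?r (take i Y) = paren ?r (ofs + eta) + depth ?r (take (i - 1) (C (eta - 1)))"
    by simp
  then show ?thesis
    using Y.depth_take_chain[of j "Suc j" i] depth_take_chain[of "eta - 1" "Suc j" "i - 1"] j
    by (auto simp: depth_shift_def paren_def) arith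
qed

lemma depth_take_X_after_open:
  "depth (ofs + Suc j) (take (Suc (p (Suc j))) X) = 1"
proof -
  have "depth (ofs + Suc j) (take (p (Suc j)) (C j)) = 0"
    using chain_pos_open[of "Suc j"] j by (simp add: unmatched_open_def)
  moreover have "p (Suc j) < p j" if "1 \<le> j" using chain_pos_decreasing[of j "Suc j"] that j by simp
  ultimately have "depth (ofs + Suc j) (take (p (Suc j)) X) = 0"
    using depth_take_chain_before[of "Suc j" "p (Suc j)"] j by (auto split: if_splits)
  then show ?thesis
    using depth_take_Suc[of "p (Suc j)" X] chain_pos_less[of "Suc j"] nth_X_chain_pos[of "Suc j"] j
    by (simp add: paren_def)
qed

lemma depth_take_X_beyond_open:
  assumes "p (Suc j) < i" "i \<le> length X"
  shows "depth (ofs + Suc j) (take i X) + (if 1 \<le> j \<and> p j < i then 1 else 0) > 0"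
proof -
  have "depth (ofs + Suc j) (take i X) \<ge> 0"
    using almost_balanced_depth[of "Suc j"] j assms(2) by (simp add: matched_def)
  then show ?thesis
    using chain_pos_open[of "Suc j"] depth_take_chain_before[of "Suc j" i] assms j
    by (auto simp: unmatched_open_def)
qed

lemma depth_take_Y_chain_total: "depth (ofs + Suc j) (take (length X) (s_chain ofs Y j)) = 1"
proof -
  have "depth (ofs + Suc j) Y = (if j = 0 then 1 else 0)"
    using Y.depth_one Y.balanced_above[of "Suc j"] j by (cases j) auto
  moreover have "q j < length X" if "1 \<le> j"
    using Y.chain_pos_less[of j] that j length_Y by simp
  ultimately show ?thesis
    using Y.depth_take_chain[of j "Suc j" "length X"] j length_Y by (auto simp: depth_shift_def)
qed

lemma interlaced_Suc_if_interlaced: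
  assumes H: "interlaced j"
  shows "interlaced (Suc j)"
proof (rule ccontr)
  let ?r = "ofs + Suc j" and ?i = "q (Suc j)"
  assume "\<not> interlaced (Suc j)"
  then have gt: "(if Suc (Suc j) = eta then 0 else Suc (p (Suc (Suc j)))) < ?i"
    by (simp add: interlaced_def)
  have opn: "unmatched_open ?r (s_chain ofs Y j) 0 ?i"
    using Y.chain_pos_open[of "Suc j"] j by simp
  then have i: "1 \<le> ?i" "?i \<le> length X" and T0: "depth ?r (take ?i (s_chain ofs Y j)) = 0"
    using gt length_Y by (auto simp: unmatched_open_def)
  have A: "depth ?r (take (?i - 1) X) \<ge> 0"
    using almost_balanced_depth[of "Suc j"] j i(2) by (simp add: matched_def)
  have top: "(if Suc (Suc j) = eta then 1 else 0) +
      (if Suc (Suc j) < eta \<and> p (Suc (Suc j)) < ?i - 1 then 1 else (0::int)) = 1"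
    using gt j by (auto split: if_splits)
  show False
  proof (cases "p (Suc j) < ?i - 1")
    case False
    then show False
      using depth_take_Y_chain[OF i] T0 top A by (auto split: if_splits)
  next
    case True
    then have "(if j = 0 then length X else q j) < ?i" using H j by (simp add: interlaced_def)
    then have "1 \<le> j" "q j < ?i" using i by (auto split: if_splits)
    moreover have "depth ?r (take (?i - 1) X) + (if 1 \<le> j \<and> p j < ?i - 1 then 1 else 0) > 0"
      using depth_take_X_beyond_open[of "?i - 1"] True i by simp
    ultimately show False
      using depth_take_Y_chain[OF i] T0 top True by (auto split: if_splits)
  qed
qed

lemma interlaced_if_interlaced_Suc:
  assumes H: "interlaced (Suc j)"
  shows "interlaced j"
proof (rule ccontr)
  let ?r = "ofs + Suc j" and ?i = "Suc (Suc (p (Suc j)))"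
  assume "\<not> interlaced j"
  then have gt: "?i \<le> (if j = 0 then length X else q j)" using j by (simp add: interlaced_def)
  have i: "1 \<le> ?i" "?i \<le> length X"
    using gt Y.chain_pos_less[of j] j length_Y by (auto split: if_splits)
  have next_before: "(if Suc (Suc j) = eta then 0 else Suc (p (Suc (Suc j)))) < ?i"
    using chain_pos_decreasing[of "Suc j" "Suc (Suc j)"] j by auto
  have "\<not> (1 \<le> j \<and> p j < ?i - 1)"
    using chain_pos_decreasing[of j "Suc j"] j by auto
  moreover have "\<not> (1 \<le> j \<and> q j < ?i)" using gt by auto
  ultimately have T0: "depth ?r (take ?i (s_chain ofs Y j)) = 0"
    using depth_take_Y_chain[OF i] depth_take_X_after_open next_before j
    by (auto split: if_splits)
  then have "?i < length X" using depth_take_Y_chain_total i(2) by (cases "?i = length X") auto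
  then have "\<not> q (Suc j) < ?i"
    using Y.chain_pos_open[of "Suc j"] j T0 length_Y by (auto simp: unmatched_open_def)
  then show False using H next_before by (simp add: interlaced_def)
qed

end

lemma interlaced_iff_0: "j < eta \<Longrightarrow> interlaced j \<longleftrightarrow> interlaced 0"
proof (induction j)
  case (Suc j)
  then have j: "Suc j < eta" by simp
  have "interlaced (Suc j) \<longleftrightarrow> interlaced j"
    using interlaced_Suc_if_interlaced[OF j] interlaced_if_interlaced_Suc[OF j] by blast
  also have "\<dots> \<longleftrightarrow> interlaced 0" using Suc.IH j by simp
  finally show ?case .
qed simp

lemma head_chain_Y: "s_chain ofs Y (eta - 1) ! 0 = (if a = Suc (Suc ofs) then ofs + eta - 1 else ofs + eta)"
proof (cases "eta = 1")
  case True
  have "Y ! 0 = ofs + eta" by (simp add: Y_def)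
  then show ?thesis using True last_cases last_le by auto
next
  case False
  then have eta: "2 \<le> eta" using eta_pos by simp
  have "interlaced 0 \<longleftrightarrow> a = Suc (Suc ofs)"
    using chain_pos_1_last[OF eta] chain_pos_less[of 1] eta length_X by (auto simp: interlaced_def)
  moreover have "interlaced (eta - 1) \<longleftrightarrow> q (eta - 1) = 0"
    using eta by (simp add: interlaced_def)
  ultimately have q0: "q (eta - 1) = 0 \<longleftrightarrow> a = Suc (Suc ofs)"
    using interlaced_iff_0[of "eta - 1"] eta by simp
  show ?thesis
  proof (cases "a = Suc (Suc ofs)")
    case True
    then show ?thesis using q0 Y.nth_chain_pos[of "eta - 1" "eta - 1"] eta by simp
  next
    case False
    have "q l \<noteq> 0" if "1 \<le> l" "l \<le> eta - 1" for l
    proof (cases "l = eta - 1")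
      case False
      then have "q (eta - 1) < q l" using Y.chain_pos_decreasing[of l "eta - 1"] that eta by simp
      then show ?thesis by simp
    qed (use q0 \<open>a \<noteq> Suc (Suc ofs)\<close> in simp)
    then have "s_chain ofs Y (eta - 1) ! 0 = Y ! 0"
      using Y.nth_chain_unchanged[of "eta - 1" 0] eta by fastforce
    then show ?thesis using False by (simp add: Y_def)
  qed
qed

end

section \<open>The action of \<open>w\<^sub>0\<^sup>R\<close> and the map \<open>\<chi>\<^sub>R\<close>\<close>

lemma act_Nil[simp]: "act [] v = v" by (simp add: act_def)
lemma act_Cons[simp]: "act (r # rs) v = s_op r (act rs v)" by (simp add: act_def)
lemma act_append[simp]: "act (xs @ ys) v = act xs (act ys v)" by (simp add: act_def)

lemma act_s_chain: "act (rev [ofs + 1..<ofs + k + 1]) v = s_chain ofs v k"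
  by (induction k) auto

lemma act_balanced: "\<forall>r\<in>set rs. balanced r v \<Longrightarrow> act rs v = v"
  by (induction rs) (auto simp: s_op_balanced)

definition w0_block :: "nat \<Rightarrow> nat \<Rightarrow> nat list" where
  "w0_block ofs eta = concat (map (\<lambda>k. rev [ofs + 1..<ofs + k + 1]) [1..<eta])"

lemma w0R_word_eq_blocks:
  "w0R_word R = concat (map (\<lambda>i. w0_block (offset R i) (rect_rows R i)) [0..<length R])"
  unfolding w0R_word_def w0_block_def by simp

lemma set_w0_block: "r \<in> set (w0_block ofs eta) \<Longrightarrow> ofs < r \<and> r < ofs + eta"
  unfolding w0_block_def by auto

lemma w0_block_Suc:
  "1 \<le> e \<Longrightarrow> w0_block ofs (Suc e) = w0_block ofs e @ rev [ofs + 1..<ofs + e + 1]"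
  unfolding w0_block_def by simp

lemma act_w0_block_balanced:
  assumes "block_balanced ofs eta v"
  shows "act (w0_block ofs eta) v = v"
proof (rule act_balanced, intro ballI)
  fix r assume "r \<in> set (w0_block ofs eta)"
  then have "r = ofs + (r - ofs)" "1 \<le> r - ofs" "r - ofs < eta" by (auto dest: set_w0_block)
  then show "balanced r v" using assms unfolding block_balanced_def by metis
qed

lemma block_balanced_cong:
  assumes "block_balanced ofs eta v"
    and "\<And>r. ofs < r \<Longrightarrow> r < ofs + eta \<Longrightarrow> map (paren r) v' = map (paren r) v"
  shows "block_balanced ofs eta v'"
  unfolding block_balanced_def
proof (intro allI impI)
  fix j assume j: "1 \<le> j" "j < eta"
  then have "map (paren (ofs + j)) v' = map (paren (ofs + j)) v" using assms(2) by simp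
  then show "balanced (ofs + j) v'"
    using assms(1) j matched_cong depth_cong unfolding block_balanced_def by metis
qed

context almost_balanced
begin

lemma act_w0_block_chain: "act (w0_block ofs eta) X = C (eta - 1)"
proof (cases "2 \<le> eta")
  case True
  have "act (w0_block ofs eta) X = act (w0_block ofs (eta - 1)) (C (eta - 1))"
    using w0_block_Suc[of "eta - 1" ofs] True act_s_chain[of ofs "eta - 1" X] by simp
  also have "\<dots> = C (eta - 1)"
  proof (rule act_balanced, intro ballI)
    fix r assume "r \<in> set (w0_block ofs (eta - 1))"
    then have "1 \<le> r - ofs" "Suc (r - ofs) < eta" "r = ofs + (r - ofs)" by (auto dest: set_w0_block)
    then show "balanced r (C (eta - 1))" using chain_balanced_below by metis
  qed
  finally show ?thesis .
next
  case False
  then show ?thesis by (simp add: w0_block_def)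
qed

end

lemma act_single_neutral: "\<forall>r\<in>set rs. paren r a = 0 \<Longrightarrow> act rs [a] = [a]"
  by (rule act_balanced) (simp add: matched_eq_matched_from)

lemma act_w0_block_first: "1 \<le> eta \<Longrightarrow> act (w0_block ofs eta) [Suc ofs] = [ofs + eta]"
proof (induction eta rule: dec_induct)
  case (step e)
  have "act (w0_block ofs e) [ofs + Suc e] = [ofs + Suc e]"
    by (rule act_single_neutral) (auto simp: paren_def dest: set_w0_block)
  then show ?case
    using step.hyps act_s_chain[of ofs e "[Suc ofs]"] s_chain_single[of ofs e]
    by (simp add: w0_block_Suc)
qed (simp add: w0_block_def)

lemma offset_Suc: "offset R (Suc i) = offset R i + rect_rows R i"
  by (simp add: offset_def)

lemma offset_mono: "i \<le> j \<Longrightarrow> offset R i \<le> offset R j"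
  unfolding offset_def by (rule sum_mono2) auto

lemma offset_add_rows_le: "i < j \<Longrightarrow> offset R i + rect_rows R i \<le> offset R j"
  using offset_mono[of "Suc i" j R] by (simp add: offset_Suc)

lemma block_exists:
  assumes "a \<in> {1..total_n R}"
  shows "\<exists>i<length R. a \<in> block R i"
proof -
  have "0 < a \<Longrightarrow> a \<le> offset R n \<Longrightarrow> \<exists>i<n. a \<in> block R i" for n
  proof (induction n)
    case (Suc n)
    then show ?case
      by (cases "a \<le> offset R n") (auto simp: offset_Suc block_def intro: less_SucI)
  qed (simp add: offset_def)
  then show ?thesis using assms by (simp add: total_n_def offset_def)
qed

lemma block_less: "a \<in> block R i \<Longrightarrow> b \<in> block R j \<Longrightarrow> a < b \<Longrightarrow> i \<le> j"
  using offset_add_rows_le[of j i R] by (force simp: block_def)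

lemma block_unique:
  assumes "a \<in> block R i" "a \<in> block R j"
  shows "i = j"
proof (rule ccontr)
  assume "i \<noteq> j"
  then consider "i < j" | "j < i" by linarith
  then show False
    using assms offset_add_rows_le[of i j R] offset_add_rows_le[of j i R] by cases (auto simp: block_def)
qed

lemma first_in_block: "1 \<le> rect_rows R i \<Longrightarrow> Suc (offset R i) \<in> block R i"
  and top_in_block: "1 \<le> rect_rows R i \<Longrightarrow> offset R i + rect_rows R i \<in> block R i"
  by (simp_all add: block_def)

lemma other_block_bracket:
  assumes "i' \<noteq> i" "offset R i' < r" "r < offset R i' + rect_rows R i'"
  shows "r < offset R i \<or> offset R i + rect_rows R i < r"
  using assms offset_add_rows_le[of i' i R] offset_add_rows_le[of i i' R]
  by (cases "i' < i") auto

lemma paren_other_block: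
  assumes "i' \<noteq> i" "a \<in> block R i" "1 \<le> j" "j < rect_rows R i'"
  shows "paren (offset R i' + j) a = 0"
  using other_block_bracket[OF assms(1), of R "offset R i' + j"] assms
  by (auto simp: block_def paren_def)

definition rect_balanced :: "(nat \<times> nat) list \<Rightarrow> nat list \<Rightarrow> bool" where
  "rect_balanced R v \<longleftrightarrow> (\<forall>i < length R. block_balanced (offset R i) (rect_rows R i) v)"

definition rect_almost_balanced :: "(nat \<times> nat) list \<Rightarrow> nat \<Rightarrow> nat list \<Rightarrow> bool" where
  "rect_almost_balanced R i0 v \<longleftrightarrow> i0 < length R \<and> almost_balanced (offset R i0) (rect_rows R i0) v \<and>
     (\<forall>i < length R. i \<noteq> i0 \<longrightarrow> block_balanced (offset R i) (rect_rows R i) v)"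

abbreviation block_top :: "(nat \<times> nat) list \<Rightarrow> nat \<Rightarrow> nat" where
  "block_top R i \<equiv> offset R i + rect_rows R i"

abbreviation block_chain :: "(nat \<times> nat) list \<Rightarrow> nat \<Rightarrow> nat list \<Rightarrow> nat list" where
  "block_chain R i v \<equiv> s_chain (offset R i) v (rect_rows R i - 1)"

lemma act_concat_fixed:
  assumes "act (g i0) v = v'" "\<And>i. i \<in> set ixs \<Longrightarrow> i \<noteq> i0 \<Longrightarrow> act (g i) v = v \<and> act (g i) v' = v'"
    and "distinct ixs"
  shows "act (concat (map g ixs)) v = (if i0 \<in> set ixs then v' else v)"
  using assms(2,3) by (induction ixs) (auto simp: assms(1))

lemma act_w0R_blocks:
  assumes "i0 < length R" "act (w0_block (offset R i0) (rect_rows R i0)) v = v'"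
    and "\<And>i. i < length R \<Longrightarrow> i \<noteq> i0 \<Longrightarrow>
      act (w0_block (offset R i) (rect_rows R i)) v = v \<and> act (w0_block (offset R i) (rect_rows R i)) v' = v'"
  shows "act (w0R_word R) v = v'"
  using act_concat_fixed[of "\<lambda>i. w0_block (offset R i) (rect_rows R i)" i0 v v' "[0..<length R]"] assms
  by (simp add: w0R_word_eq_blocks)

lemma block_balanced_chain_other:
  assumes M: "rect_almost_balanced R i v" and i': "i' < length R" "i' \<noteq> i"
  shows "block_balanced (offset R i') (rect_rows R i') (block_chain R i v)"
proof (rule block_balanced_cong)
  show "block_balanced (offset R i') (rect_rows R i') v"
    using M i' by (simp add: rect_almost_balanced_def)
  fix r assume "offset R i' < r" "r < offset R i' + rect_rows R i'"
  then have "r < offset R i \<or> offset R i + rect_rows R i < r"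
    using other_block_bracket[OF i'(2)] by blast
  then show "map (paren r) (block_chain R i v) = map (paren r) v"
    by (cases "rect_rows R i") (auto simp: paren_s_chain_far)
qed

lemma act_w0R_almost_balanced:
  assumes M: "rect_almost_balanced R i v"
  shows "act (w0R_word R) v = block_chain R i v"
proof (rule act_w0R_blocks)
  show "i < length R" using M by (simp add: rect_almost_balanced_def)
  show "act (w0_block (offset R i) (rect_rows R i)) v = block_chain R i v"
    using M almost_balanced.act_w0_block_chain by (simp add: rect_almost_balanced_def)
  fix i' assume "i' < length R" "i' \<noteq> i"
  then show "act (w0_block (offset R i') (rect_rows R i')) v = v \<and>
    act (w0_block (offset R i') (rect_rows R i')) (block_chain R i v) = block_chain R i v"
    using M act_w0_block_balanced block_balanced_chain_other
    by (simp add: rect_almost_balanced_def)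
qed

lemma act_w0R_first:
  assumes "i < length R" "1 \<le> rect_rows R i"
  shows "act (w0R_word R) [Suc (offset R i)] = [block_top R i]"
proof (rule act_w0R_blocks[OF assms(1)])
  show "act (w0_block (offset R i) (rect_rows R i)) [Suc (offset R i)] = [block_top R i]"
    using act_w0_block_first[OF assms(2)] .
  fix i' assume "i' < length R" "i' \<noteq> i"
  have "act (w0_block (offset R i') (rect_rows R i')) [a] = [a]" if "a \<in> block R i" for a
  proof (rule act_single_neutral, intro ballI)
    fix r assume "r \<in> set (w0_block (offset R i') (rect_rows R i'))"
    then show "paren r a = 0"
      using paren_other_block[OF \<open>i' \<noteq> i\<close> that, of "r - offset R i'"] by (auto dest: set_w0_block)
  qed
  then show "act (w0_block (offset R i') (rect_rows R i')) [Suc (offset R i)] = [Suc (offset R i)] \<and>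
    act (w0_block (offset R i') (rect_rows R i')) [block_top R i] = [block_top R i]"
    using first_in_block[OF assms(2)] top_in_block[OF assms(2)] by blast
qed

lemma last_letter_first_of_block:
  assumes "rect_balanced R (v @ [c])" "i < length R" "c \<in> block R i"
  shows "c = Suc (offset R i)"
proof (rule ccontr)
  assume "c \<noteq> Suc (offset R i)"
  then obtain j where j: "1 \<le> j" "j < rect_rows R i" "c = Suc (offset R i + j)"
    using assms(3) by (auto simp: block_def intro!: that[of "c - Suc (offset R i)"])
  then have "balanced (offset R i + j) (v @ [c])"
    using assms(1,2) by (simp add: rect_balanced_def block_balanced_def)
  then show False using j(3) by (auto simp: matched_snoc paren_def dest: matched_depth_nonneg)
qed

lemma rect_almost_balanced_snoc:
  assumes "rect_balanced R (v @ [Suc (offset R i)])" "i < length R" "1 \<le> rect_rows R i"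
  shows "rect_almost_balanced R i v"
proof -
  have "block_balanced (offset R i') (rect_rows R i') v"
    if "i' < length R" "i' \<noteq> i" for i'
    unfolding block_balanced_def
  proof (intro allI impI)
    fix j assume j: "1 \<le> j" "j < rect_rows R i'"
    then have "balanced (offset R i' + j) (v @ [Suc (offset R i)])"
      using assms(1) that(1) by (simp add: rect_balanced_def block_balanced_def)
    moreover have "paren (offset R i' + j) (Suc (offset R i)) = 0"
      using paren_other_block[OF that(2) first_in_block[OF assms(3)] j] .
    ultimately show "balanced (offset R i' + j) v" using balanced_snoc_neutral by blast
  qed
  then show ?thesis
    using assms almost_balanced_if_snoc by (simp add: rect_almost_balanced_def rect_balanced_def)
qed

lemma chi_snoc: "chi R (v @ [a]) = act (w0R_word R) [a] @ act (w0R_word R) v"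
  by (cases v) auto

lemma block_balanced_Cons_neutral:
  assumes "block_balanced ofs eta v" "\<And>j. 1 \<le> j \<Longrightarrow> j < eta \<Longrightarrow> paren (ofs + j) a = 0"
  shows "block_balanced ofs eta (a # v)"
  using assms by (simp add: block_balanced_def matched_Cons_neutral)

lemma rect_balanced_top_Cons_chain:
  assumes M: "rect_almost_balanced R i v" and "1 \<le> rect_rows R i"
  shows "rect_balanced R (block_top R i # block_chain R i v)"
  unfolding rect_balanced_def
proof (intro allI impI)
  fix i' assume "i' < length R"
  show "block_balanced (offset R i') (rect_rows R i') (block_top R i # block_chain R i v)"
  proof (cases "i' = i")
    case True
    then show ?thesis
      using M almost_balanced.top_Cons_chain_balanced
      by (simp add: rect_almost_balanced_def block_balanced_def)
  next
    case False
    then show ?thesis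
      using block_balanced_chain_other[OF M \<open>i' < length R\<close>] paren_other_block[OF False top_in_block]
        assms(2) by (simp add: block_balanced_Cons_neutral)
  qed
qed

text \<open>Every word of \<open>W(R)\<close> is a \<open>balanced_word\<close> (\<open>WR_balanced_word\<close>); this is all the proof uses
  about \<open>W(R)\<close>.\<close>
definition balanced_word :: "(nat \<times> nat) list \<Rightarrow> nat list \<Rightarrow> bool" where
  "balanced_word R w \<longleftrightarrow> set w \<subseteq> {1..total_n R} \<and> rect_balanced R w"

definition block_of :: "(nat \<times> nat) list \<Rightarrow> nat \<Rightarrow> nat" where
  "block_of R a = (THE i. i < length R \<and> a \<in> block R i)"

lemma block_of_eq: "i < length R \<Longrightarrow> a \<in> block R i \<Longrightarrow> block_of R a = i"
  unfolding block_of_def using block_unique by blast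

lemma block_of:
  assumes "a \<in> {1..total_n R}"
  shows "block_of R a < length R" and "a \<in> block R (block_of R a)"
  using block_exists[OF assms] block_of_eq by metis+

lemma chi_balanced_word:
  assumes rows: "\<forall>i<length R. 1 \<le> rect_rows R i" and w: "balanced_word R (v @ [a])"
  defines "i \<equiv> block_of R a"
  shows chi_balanced_word_last: "a = Suc (offset R i)"
    and chi_balanced_word_butlast: "rect_almost_balanced R i v"
    and chi_balanced_word_eq: "chi R (v @ [a]) = block_top R i # block_chain R i v"
    and balanced_word_chi: "balanced_word R (chi R (v @ [a]))"
proof -
  have i: "i < length R" "a \<in> block R i"
    using w block_of[of a R] by (auto simp: balanced_word_def i_def)
  have rows_i: "1 \<le> rect_rows R i" using rows i(1) by simp
  show a: "a = Suc (offset R i)"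
    using last_letter_first_of_block[OF _ i, of v] w by (simp add: balanced_word_def)
  then show M: "rect_almost_balanced R i v"
    using rect_almost_balanced_snoc[OF _ i(1) rows_i] w by (simp add: balanced_word_def)
  show chi: "chi R (v @ [a]) = block_top R i # block_chain R i v"
    using act_w0R_first[OF i(1) rows_i] act_w0R_almost_balanced[OF M] a by (simp add: chi_snoc)
  have "block_top R i \<le> total_n R"
    using offset_mono[of "Suc i" "length R" R] i(1) by (simp add: offset_Suc total_n_def offset_def)
  moreover have "set (block_chain R i v) \<subseteq> set v \<union> {Suc (offset R i)..block_top R i}"
    using set_s_chain[of "offset R i" v "rect_rows R i - 1"] rows_i by simp
  ultimately show "balanced_word R (chi R (v @ [a]))"
    using w rect_balanced_top_Cons_chain[OF M rows_i] rows_i unfolding chi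
    by (auto simp: balanced_word_def)
qed

lemma block_chain_insert_nth_other:
  assumes "a \<in> block R i'" "i' \<noteq> i" "k \<le> length v"
  shows "block_chain R i (insert_nth k a v) = insert_nth k a (block_chain R i v)"
  using s_chain_insert_nth[OF assms(3)] paren_other_block[where i' = i and i = i'] assms(1,2) by simp

lemma block_chain_Cons_other:
  "a \<in> block R i' \<Longrightarrow> i' \<noteq> i \<Longrightarrow> block_chain R i (a # v) = a # block_chain R i v"
  using block_chain_insert_nth_other[of a R i' i 0 v] by (simp add: insert_nth_0)

lemma block_chain_nth_block:
  assumes "q < length v" "v ! q \<in> block R i'"
  shows "block_chain R i v ! q \<in> block R i'"
proof (cases "rect_rows R i = 0")
  case False
  then have "{Suc (offset R i)..offset R i + Suc (rect_rows R i - 1)} = block R i"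
    by (auto simp: block_def)
  moreover have "i' = i" if "v ! q \<in> block R i" using block_unique[OF assms(2) that] .
  ultimately show ?thesis
    using nth_s_chain[OF assms(1), of "offset R i" "rect_rows R i - 1"] assms(2) by auto
qed (use assms in simp)

lemma rotated_block_chain_head:
  assumes "almost_balanced (offset R i) (rect_rows R i) (V @ [a])"
    and "a = Suc (offset R i) \<or> a = Suc (Suc (offset R i))" "a \<le> block_top R i"
  shows "block_chain R i (block_top R i # butlast (block_chain R i (V @ [a]))) ! 0 =
    (if a = Suc (Suc (offset R i)) then block_top R i - 1 else block_top R i)"
proof -
  interpret rotation "offset R i" "rect_rows R i" "V @ [a]" V a
    using assms by (intro rotation.intro rotation_axioms.intro) auto
  show ?thesis using head_chain_Y by (simp add: Y_def)
qed

section \<open>Knuth equivalence\<close>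

lemma matched_from_filter:
  assumes "P r" "P (Suc r)"
  shows "matched_from r c (filter P w) \<longleftrightarrow> matched_from r c w"
    and "depth r (filter P w) = depth r w"
proof -
  have neutral: "\<not> P a \<Longrightarrow> paren r a = 0" for a using assms by (auto simp: paren_def)
  show "matched_from r c (filter P w) \<longleftrightarrow> matched_from r c w"
    by (induction w arbitrary: c) (auto simp: neutral dest: matched_from_nonneg)
  show "depth r (filter P w) = depth r w"
    by (induction w) (auto simp: neutral)
qed

lemma matched_replace_infix:
  assumes "\<And>c. c \<ge> 0 \<Longrightarrow> matched_from r c m1 \<longleftrightarrow> matched_from r c m2" and "depth r m1 = depth r m2"
  shows "matched r (u @ m1 @ w) \<longleftrightarrow> matched r (u @ m2 @ w)"
  using assms matched_depth_nonneg[of r u]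
  by (auto simp: matched_eq_matched_from matched_from_append)

lemma knuth_step_matched:
  assumes "knuth_step v v'"
  shows "matched r v \<longleftrightarrow> matched r v'" and "depth r v = depth r v'"
proof -
  from assms obtain u m1 m2 w where v: "v = u @ m1 @ w" "v' = u @ m2 @ w"
    and key: "\<And>c. c \<ge> 0 \<Longrightarrow> matched_from r c m1 \<longleftrightarrow> matched_from r c m2"
    and dep: "depth r m1 = depth r m2"
  proof cases
    case (K1 x y z u w)
    show ?thesis by (rule that[of u "[y, x, z]" w "[y, z, x]"]) (use K1 in \<open>auto simp: paren_def\<close>)
  next
    case (K2 x y z u w)
    show ?thesis by (rule that[of u "[x, z, y]" w "[z, x, y]"]) (use K2 in \<open>auto simp: paren_def\<close>)
  qed
  show "matched r v \<longleftrightarrow> matched r v'" unfolding v by (rule matched_replace_infix[OF key dep])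
  show "depth r v = depth r v'" using v dep by simp
qed

lemma knuth_equiv_balanced: "v \<sim>\<^sub>K v' \<Longrightarrow> balanced r v \<longleftrightarrow> balanced r v'"
  unfolding knuth_equiv_def by (induction rule: equivclp_induct) (auto simp: knuth_step_matched)

lemma knuth_equiv_if_step: "knuth_step v v' \<Longrightarrow> v \<sim>\<^sub>K v'"
  by (simp add: knuth_equiv_def r_into_equivclp)

lemma wordY_filter:
  assumes j: "1 \<le> j" "j < rect_rows R i"
  shows "filter (\<lambda>a. a \<in> {offset R i + j, Suc (offset R i + j)}) (wordY R i) =
     replicate (rect_cols R i) (Suc (offset R i + j)) @ replicate (rect_cols R i) (offset R i + j)"
proof -
  let ?o = "offset R i" and ?e = "rect_rows R i" and ?m = "rect_cols R i"
  let ?P = "\<lambda>a. a \<in> {?o + j, Suc (?o + j)}"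
  have rows: "[1..<?e + 1] = [1..<j] @ [j, Suc j] @ [Suc (Suc j)..<?e + 1]"
    using j upt_add_eq_append[of 1 j "?e + 1 - j"] by (simp add: upt_conv_Cons)
  have "filter ?P (concat (map (\<lambda>k. replicate ?m (?o + k)) (rev [1..<j]))) = []"
    and "filter ?P (concat (map (\<lambda>k. replicate ?m (?o + k)) (rev [Suc (Suc j)..<?e + 1]))) = []"
    by (auto simp: filter_empty_conv)
  then show ?thesis unfolding wordY_def rows by simp
qed

lemma depth_replicate: "depth r (replicate n a) = int n * paren r a"
  by (induction n) (auto simp: algebra_simps)

lemma matched_from_replicate_open: "c \<ge> 0 \<Longrightarrow> matched_from r c (replicate n (Suc r))"
  by (induction n arbitrary: c) (auto simp: paren_def)

lemma matched_from_replicate_close: "c \<ge> int n \<Longrightarrow> matched_from r c (replicate n r)"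
  by (induction n arbitrary: c) (auto simp: paren_def)

lemma balanced_wordY:
  assumes "1 \<le> j" "j < rect_rows R i"
  shows "balanced (offset R i + j) (wordY R i)"
proof -
  let ?r = "offset R i + j" and ?m = "rect_cols R i"
  let ?P = "\<lambda>a. a \<in> {?r, Suc ?r}"
  have "depth ?r (replicate ?m (Suc ?r)) = int ?m" "depth ?r (replicate ?m ?r) = - int ?m"
    by (simp_all add: depth_replicate paren_def)
  then have "balanced ?r (replicate ?m (Suc ?r) @ replicate ?m ?r)"
    using matched_from_replicate_open matched_from_replicate_close
    by (simp add: matched_eq_matched_from matched_from_append)
  then have "balanced ?r (filter ?P (wordY R i))" by (simp only: wordY_filter[OF assms])
  then show ?thesis
    using matched_from_filter[where P = ?P and r = ?r] by (simp add: matched_eq_matched_from)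
qed

lemma WR_balanced_word:
  assumes w: "w \<in> WR R"
  shows "balanced_word R w"
proof -
  have "balanced (offset R i + j) w" if i: "i < length R" and j: "1 \<le> j" "j < rect_rows R i" for i j
  proof -
    let ?r = "offset R i + j"
    have "restrict_word w (block R i) \<sim>\<^sub>K wordY R i" using w i unfolding WR_def by auto
    then have "balanced ?r (restrict_word w (block R i))"
      using balanced_wordY[OF j] knuth_equiv_balanced by blast
    moreover have "?r \<in> block R i" "Suc ?r \<in> block R i" using j unfolding block_def by auto
    ultimately show ?thesis
      using matched_from_filter[where P = "\<lambda>a. a \<in> block R i" and r = ?r] unfolding restrict_word_def
      by (simp add: matched_eq_matched_from)
  qed
  then show ?thesis using w by (simp add: balanced_word_def rect_balanced_def block_balanced_def WR_def)
qed

lemma balanced_word_knuth_step: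
  assumes "balanced_word R v" "knuth_step v v'"
  shows "balanced_word R v'"
proof -
  have "set v' = set v" using assms(2) by cases auto
  then show ?thesis
    using assms knuth_step_matched[OF assms(2)]
    by (simp add: balanced_word_def rect_balanced_def block_balanced_def)
qed

locale knuth_swap =
  fixes R :: "(nat \<times> nat) list" and u :: "nat list" and x y z :: nat
  assumes rows: "\<forall>i<length R. 1 \<le> rect_rows R i"
    and x_less_y: "x < y" and y_le_z: "y \<le> z"
    and balanced: "balanced_word R (u @ [y, x, z])"
begin

abbreviation "ix \<equiv> block_of R x"
abbreviation "iy \<equiv> block_of R y"
abbreviation "iz \<equiv> block_of R z"

lemma balanced': "balanced_word R (u @ [y, z, x])"
  using balanced_word_knuth_step[OF balanced] K1[OF x_less_y y_le_z, of u "[]"] by simp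

lemma blocks: "ix < length R" "x \<in> block R ix" "iy < length R" "y \<in> block R iy"
  "iz < length R" "z \<in> block R iz"
  using balanced block_of[of _ R] by (auto simp: balanced_word_def)

lemma first_letters: "x = Suc (offset R ix)" "z = Suc (offset R iz)"
  using chi_balanced_word_last[OF rows, of "u @ [y, z]" x] chi_balanced_word_last[OF rows, of "u @ [y, x]" z]
    balanced balanced' by simp_all

lemma block_order: "ix < iz" "ix \<le> iy" "iy \<le> iz"
proof -
  show "ix \<le> iy" using block_less[OF blocks(2,4) x_less_y] .
  show "iy \<le> iz"
    using block_less[OF blocks(4,6)] y_le_z block_of_eq[OF blocks(5)] by (cases "y = z") auto
  show "ix < iz"
    using \<open>ix \<le> iy\<close> \<open>iy \<le> iz\<close> first_letters x_less_y y_le_z by (cases "ix = iz") auto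
qed

definition A where "A = block_chain R iz (u @ [y])"
definition B where "B = block_chain R ix (u @ [y])"
definition D where "D = block_chain R ix A"

lemma D_eq: "D = block_chain R iz B"
proof -
  have "1 \<le> rect_rows R ix" using rows blocks(1) by simp
  then have "offset R ix + (rect_rows R ix - 1) < offset R iz"
    using offset_add_rows_le[OF block_order(1), of R] by linarith
  then show ?thesis unfolding D_def A_def B_def by (rule s_chain_commute)
qed

lemma chi_once:
  "chi R (u @ [y, x, z]) = block_top R iz # A @ [x]"
  "chi R (u @ [y, z, x]) = block_top R ix # B @ [z]"
proof -
  have "block_chain R iz (u @ [y, x]) = A @ [x]"
    using block_chain_insert_nth_other[OF blocks(2), of iz "length (u @ [y])" "u @ [y]"] block_order(1)
    by (simp add: A_def insert_nth_def)
  then show "chi R (u @ [y, x, z]) = block_top R iz # A @ [x]"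
    using chi_balanced_word_eq[OF rows, of "u @ [y, x]" z] balanced by simp
  have "block_chain R ix (u @ [y, z]) = B @ [z]"
    using block_chain_insert_nth_other[OF blocks(6), of ix "length (u @ [y])" "u @ [y]"] block_order(1)
    by (simp add: B_def insert_nth_def)
  then show "chi R (u @ [y, z, x]) = block_top R ix # B @ [z]"
    using chi_balanced_word_eq[OF rows, of "u @ [y, z]" x] balanced' by simp
qed

lemma balanced_chi_once:
  "balanced_word R ((block_top R iz # A) @ [x])" "balanced_word R ((block_top R ix # B) @ [z])"
  using balanced_word_chi[OF rows, of "u @ [y, x]" z] balanced
    balanced_word_chi[OF rows, of "u @ [y, z]" x] balanced' chi_once
  by simp_all

lemma tops_in_blocks: "block_top R ix \<in> block R ix" "block_top R iz \<in> block R iz"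
  using top_in_block rows blocks by auto

lemma almost_balanced_A: "almost_balanced (offset R ix) (rect_rows R ix) A"
proof (rule almost_balanced_Cons_neutral)
  show "almost_balanced (offset R ix) (rect_rows R ix) (block_top R iz # A)"
    using chi_balanced_word_butlast[OF rows balanced_chi_once(1)] block_of_eq[OF blocks(1,2)]
    by (simp add: rect_almost_balanced_def)
qed (use paren_other_block[OF _ tops_in_blocks(2)] block_order(1) in auto)

lemma almost_balanced_B: "almost_balanced (offset R iz) (rect_rows R iz) B"
proof (rule almost_balanced_Cons_neutral)
  show "almost_balanced (offset R iz) (rect_rows R iz) (block_top R ix # B)"
    using chi_balanced_word_butlast[OF rows balanced_chi_once(2)] block_of_eq[OF blocks(5,6)]
    by (simp add: rect_almost_balanced_def)
qed (use paren_other_block[OF _ tops_in_blocks(1)] block_order(1) in auto)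

lemma chi_twice:
  "chi R (chi R (u @ [y, x, z])) = block_top R ix # block_top R iz # D"
  "chi R (chi R (u @ [y, z, x])) = block_top R iz # block_top R ix # D"
  using chi_balanced_word_eq[OF rows balanced_chi_once(1)] chi_balanced_word_eq[OF rows balanced_chi_once(2)]
    block_chain_Cons_other[OF tops_in_blocks(2), of ix A] block_chain_Cons_other[OF tops_in_blocks(1), of iz B]
    block_order(1) chi_once D_eq
  by (simp_all add: D_def)

lemma balanced_chi_twice:
  "balanced_word R (block_top R ix # block_top R iz # D)" "balanced_word R (block_top R iz # block_top R ix # D)"
  using balanced_word_chi[OF rows balanced_chi_once(1)] balanced_word_chi[OF rows balanced_chi_once(2)]
    chi_once chi_twice by simp_all

lemma length_D: "length D = Suc (length u)"
  by (simp add: D_def A_def)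

lemma last_D: "last D \<in> block R iy"
proof -
  have "(u @ [y]) ! length u \<in> block R iy" using blocks(4) by simp
  then have "D ! length u \<in> block R iy"
    unfolding D_def A_def by (intro block_chain_nth_block) simp_all
  then show ?thesis using length_D by (simp add: last_conv_nth flip: length_0_conv)
qed

lemma chi_thrice:
  "chi R (chi R (chi R (u @ [y, x, z]))) =
    block_top R iy # block_chain R iy (block_top R ix # block_top R iz # butlast D)"
  "chi R (chi R (chi R (u @ [y, z, x]))) =
    block_top R iy # block_chain R iy (block_top R iz # block_top R ix # butlast D)"
proof -
  have D: "D = butlast D @ [last D]" using length_D by (simp flip: length_0_conv)
  have "block_of R (last D) = iy" using block_of_eq[OF blocks(3) last_D] .
  then show "chi R (chi R (chi R (u @ [y, x, z]))) =
      block_top R iy # block_chain R iy (block_top R ix # block_top R iz # butlast D)"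
    "chi R (chi R (chi R (u @ [y, z, x]))) =
      block_top R iy # block_chain R iy (block_top R iz # block_top R ix # butlast D)"
    using chi_balanced_word_eq[OF rows, of "block_top R ix # block_top R iz # butlast D" "last D"]
      chi_balanced_word_eq[OF rows, of "block_top R iz # block_top R ix # butlast D" "last D"]
      balanced_chi_twice D chi_twice
    by (metis append_Cons)+
qed

lemma knuth_step_middle:
  assumes "ix < iy" "iy < iz"
  shows "knuth_step (chi R (chi R (chi R (u @ [y, x, z])))) (chi R (chi R (chi R (u @ [y, z, x]))))"
proof -
  have "block_top R ix < block_top R iy" "block_top R iy \<le> block_top R iz"
    using offset_add_rows_le[OF assms(1), of R] offset_add_rows_le[OF assms(2), of R] rows blocks
    by (fastforce simp: block_def)+
  moreover have "block_chain R iy (a # b # v) = a # b # block_chain R iy v"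
    if "a \<in> block R ia" "b \<in> block R ib" "ia \<noteq> iy" "ib \<noteq> iy" for a b ia ib v
    using block_chain_Cons_other[OF that(1,3)] block_chain_Cons_other[OF that(2,4)] by simp
  ultimately show ?thesis
    using chi_thrice tops_in_blocks assms K1[of "block_top R ix" "block_top R iy" "block_top R iz" "[]"]
    by simp
qed

lemma knuth_step_top:
  assumes "iy = iz"
  shows "knuth_step (chi R (chi R (chi R (u @ [y, x, z])))) (chi R (chi R (chi R (u @ [y, z, x]))))"
proof -
  let ?Mx = "block_top R ix" and ?Mz = "block_top R iz"
  let ?F = "block_chain R iz (?Mz # butlast D)"
  have y: "y = Suc (offset R iz)" using blocks(4) assms first_letters(2) y_le_z by (auto simp: block_def)
  have B: "B = block_chain R ix u @ [y]"
    using block_chain_insert_nth_other[OF blocks(4), of ix "length u" u] assms block_order(1)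
    by (simp add: B_def insert_nth_def)
  have "y \<le> ?Mz" "y \<noteq> Suc (Suc (offset R iz))" using y rows blocks(5) by auto
  then have "?F ! 0 = ?Mz"
    using rotated_block_chain_head[of R iz "block_chain R ix u" y] almost_balanced_B y
    unfolding B[symmetric] D_eq[symmetric] by simp
  moreover have "?F \<noteq> []" by (metis length_s_chain list.discI length_0_conv)
  ultimately obtain F' where F: "?F = ?Mz # F'" by (cases ?F) auto
  have "block_chain R iz (?Mx # ?Mz # butlast D) = ?Mx # ?Mz # F'"
    using block_chain_Cons_other[OF tops_in_blocks(1)] block_order(1) F by simp
  moreover have "block_chain R iz (?Mz # ?Mx # butlast D) = ?Mz # ?Mx # F'"
    using block_chain_insert_nth_other[OF tops_in_blocks(1), of iz 1 "?Mz # butlast D"] block_order(1) F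
    by (simp add: insert_nth_def)
  moreover have "?Mx < ?Mz"
    using offset_add_rows_le[OF block_order(1), of R] rows blocks by fastforce
  ultimately show ?thesis
    using chi_thrice assms K1[of ?Mx ?Mz ?Mz "[]" F'] by simp
qed

lemma knuth_step_bottom:
  assumes "iy = ix"
  shows "knuth_step (chi R (chi R (chi R (u @ [y, x, z])))) (chi R (chi R (chi R (u @ [y, z, x]))))"
proof -
  let ?Mx = "block_top R ix" and ?Mz = "block_top R iz"
  let ?G = "block_chain R ix (?Mx # butlast D)"
  have A: "A = block_chain R iz u @ [y]"
    using block_chain_insert_nth_other[OF blocks(4), of iz "length u" u] assms block_order(1)
    by (simp add: A_def insert_nth_def)
  have y_range: "offset R ix < y" "y \<le> ?Mx" using blocks(4) assms by (auto simp: block_def)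
  then have y: "y = Suc (Suc (offset R ix))"
    using almost_balanced.last_letter_cases[OF almost_balanced_A A] x_less_y first_letters(1) by auto
  have "(if y = Suc (Suc (offset R ix)) then ?Mx - 1 else ?Mx) = ?Mx - 1" using y by simp
  then have "?G ! 0 = ?Mx - 1"
    using rotated_block_chain_head[of R ix "block_chain R iz u" y] almost_balanced_A y y_range
    unfolding A[symmetric] D_def[symmetric] by simp
  moreover have "?G \<noteq> []" by (metis length_s_chain list.discI length_0_conv)
  ultimately obtain G' where G: "?G = (?Mx - 1) # G'" by (cases ?G) auto
  have "block_chain R ix (?Mx # ?Mz # butlast D) = (?Mx - 1) # ?Mz # G'"
    using block_chain_insert_nth_other[OF tops_in_blocks(2), of ix 1 "?Mx # butlast D"] block_order(1) G
    by (simp add: insert_nth_def)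
  moreover have "block_chain R ix (?Mz # ?Mx # butlast D) = ?Mz # (?Mx - 1) # G'"
    using block_chain_Cons_other[OF tops_in_blocks(2)] block_order(1) G by simp
  moreover have "?Mx - 1 < ?Mx" "?Mx \<le> ?Mz"
    using offset_add_rows_le[OF block_order(1), of R] rows blocks by fastforce+
  ultimately show ?thesis
    using chi_thrice assms K1[of "?Mx - 1" ?Mx ?Mz "[]" G'] by simp
qed

lemma knuth_step_chi3:
  "knuth_step (chi R (chi R (chi R (u @ [y, x, z])))) (chi R (chi R (chi R (u @ [y, z, x]))))"
  using block_order knuth_step_middle knuth_step_top knuth_step_bottom by (cases "ix < iy \<and> iy < iz") auto

end

theorem lemma5p9:
  fixes R :: "(nat \<times> nat) list" and u :: "nat list" and x y z :: nat
  assumes "\<forall>i<length R. rect_rows R i \<ge> 1 \<and> rect_cols R i \<ge> 1"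
    and "x < y" and "y \<le> z"
    and "u @ [y, x, z] \<in> WR R"
  shows "(chi R ^^ 3) (u @ [y, x, z]) \<sim>\<^sub>K (chi R ^^ 3) (u @ [y, z, x])"
proof -
  interpret knuth_swap R u x y z
    using assms WR_balanced_word by unfold_locales auto
  show ?thesis
    using knuth_step_chi3 knuth_equiv_if_step by (simp add: numeral_3_eq_3)
qed

end
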